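(* Let $1<p<\infty$, $r\in[1,\infty]$, $a\colon\mathbb{R}^d \to \mathbb{C}$ a homogeneous strongly elliptic polynomial in $\mathbb{R}^d$ of degree $m\geq 2$, $A_p$ the associated elliptic operator in $L_p(\mathbb{R}^d)$, $(S_t)_{t\geq 0}$ the bounded $C_0$-semigroup on $L_p (\mathbb{R}^d)$ generated by $-A_p$, $E\subset \mathbb{R}^d$ measurable, and $T > 0$. Assume there exists $C_{\mathrm{obs}}>0$ such that for all $x_0 \in L_p (\mathbb{R}^d)$ \[ \lVert S_T x_0 \rVert_{L_p(\mathbb{R}^d)} \leq C_{\mathrm{obs}} \lVert \mathbf{1}_E S_{(\cdot)} x_0 \rVert_{L_r ((0,T);L_p(E) )}. \] Then $E$ is a thick set.
   Context: Fourier transform on the Schwartz space $\mathcal{S}(\mathbb{R}^d)$: $\mathcal{F} f (\xi) = (2\pi)^{-d/2}\int_{\mathbb{R}^d} f(x) e^{-i\xi\cdot x}\,dx$. A homogeneous strongly elliptic polynomial of degree $m\ge 2$ is $a (\xi) = \sum_{\lvert \alpha \rvert_1 = m} a_\alpha i^{\lvert \alpha \rvert_1} \xi^\alpha$ with $a_\alpha\in\mathbb{C}$ such that there is $c>0$ with $\operatorname{Re} a (\xi) \geq c \lvert \xi \rvert^m$ for all $\xi$. For $f\in \mathcal{S}(\mathbb{R}^d)$ set $Af = \mathcal{F}^{-1} (a \mathcal{F} f)=\sum_{\lvert \alpha \rvert_1 =m} a_\alpha \partial^\alpha f$; the associated elliptic operator $A_p$ is the closure of $A$ in $L_p(\mathbb{R}^d)$,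 and $-A_p$ generates a bounded $C_0$-semigroup. A set $E\subset\mathbb{R}^d$ is thick if it is measurable and there exist $\rho\in(0,1)$ and $L\in(0,\infty)^d$ with $\lvert E \cap ( \prod_{i=1}^d (0,L_i) + x ) \rvert \geq \rho \prod_{i=1}^d L_i$ for all $x\in\mathbb{R}^d$ ($\lvert\cdot\rvert$ Lebesgue measure). $\mathbf{1}_E\colon L_p(\mathbb{R}^d)\to L_p(E)$ is restriction to $E$; for $r=\infty$ the $L_r$-norm in time is the essential supremum. *)

theory Defs
  imports "HOL-Analysis.Analysis" "HOL-Probability.Essential_Supremum"
begin

text \<open>Dimension d is CARD('n); R^d is real^'n. Functions are complex valued.\<close>

definition fourier :: "(real^'n \<Rightarrow> complex) \<Rightarrow> real^'n \<Rightarrow> complex" where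
  "fourier f \<xi> = complex_of_real ((2 * pi) powr (- real CARD('n) / 2)) *
     (\<integral>x. f x * exp (- \<i> * complex_of_real (\<xi> \<bullet> x)) \<partial>lborel)"

definition fourier_inv :: "(real^'n \<Rightarrow> complex) \<Rightarrow> real^'n \<Rightarrow> complex" where
  "fourier_inv g x = complex_of_real ((2 * pi) powr (- real CARD('n) / 2)) *
     (\<integral>\<xi>. g \<xi> * exp (\<i> * complex_of_real (\<xi> \<bullet> x)) \<partial>lborel)"

definition pderiv_dir :: "'n \<Rightarrow> (real^'n \<Rightarrow> complex) \<Rightarrow> real^'n \<Rightarrow> complex" where
  "pderiv_dir i f x = vector_derivative (\<lambda>t. f (x + t *\<^sub>R axis i 1)) (at 0)"

fun iter_pderiv :: "'n list \<Rightarrow> (real^'n \<Rightarrow> complex) \<Rightarrow> real^'n \<Rightarrow> complex" where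
  "iter_pderiv [] f = f"
| "iter_pderiv (i # is) f = pderiv_dir i (iter_pderiv is f)"

definition schwartz :: "(real^'n \<Rightarrow> complex) \<Rightarrow> bool" where
  "schwartz f \<longleftrightarrow>
     (\<forall>is x i. (\<lambda>t. iter_pderiv is f (x + t *\<^sub>R axis i 1)) differentiable (at 0)) \<and>
     (\<forall>is (\<beta>::'n \<Rightarrow> nat). bounded (range (\<lambda>x.
         complex_of_real (\<Prod>i\<in>UNIV. (x $ i) ^ \<beta> i) * iter_pderiv is f x)))"

definition hom_symbol :: "nat \<Rightarrow> (('n::finite \<Rightarrow> nat) \<Rightarrow> complex) \<Rightarrow> real^'n \<Rightarrow> complex" where
  "hom_symbol m c \<xi> = (\<Sum>\<alpha>\<in>{\<alpha>::'n \<Rightarrow> nat. (\<Sum>i\<in>UNIV. \<alpha> i) = m}.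
      c \<alpha> * \<i> ^ m * (\<Prod>i\<in>UNIV. complex_of_real (\<xi> $ i) ^ \<alpha> i))"

definition strongly_elliptic :: "nat \<Rightarrow> (('n::finite \<Rightarrow> nat) \<Rightarrow> complex) \<Rightarrow> bool" where
  "strongly_elliptic m c \<longleftrightarrow>
     (\<exists>k>0. \<forall>\<xi>::real^'n. Re (hom_symbol m c \<xi>) \<ge> k * norm \<xi> ^ m)"

definition in_Lp :: "real \<Rightarrow> (real^'n \<Rightarrow> complex) \<Rightarrow> bool" where
  "in_Lp p f \<longleftrightarrow> f \<in> borel_measurable lebesgue \<and>
      integrable lebesgue (\<lambda>x. norm (f x) powr p)"

definition Lp_norm :: "real \<Rightarrow> (real^'n \<Rightarrow> complex) \<Rightarrow> real" where
  "Lp_norm p f = (\<integral>x. norm (f x) powr p \<partial>lebesgue) powr (1 / p)"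

definition Lp_norm_on :: "real \<Rightarrow> (real^'n) set \<Rightarrow> (real^'n \<Rightarrow> complex) \<Rightarrow> real" where
  "Lp_norm_on p E f = (\<integral>x\<in>E. norm (f x) powr p \<partial>lebesgue) powr (1 / p)"

definition Lr_time_norm :: "ereal \<Rightarrow> real \<Rightarrow> (real \<Rightarrow> real) \<Rightarrow> real" where
  "Lr_time_norm r T g =
     (if r = \<infinity> then real_of_ereal (esssup (restrict_space lborel {0<..<T}) (\<lambda>t. ereal (g t)))
      else (\<integral>t\<in>{0<..<T}. g t powr real_of_ereal r \<partial>lborel) powr (1 / real_of_ereal r))"

text \<open>The semigroup (S_t) generated by -A_p: for each t \<ge> 0, S_t maps L_p into L_p,
  is bounded (Lipschitz) w.r.t. the L_p norm, and on Schwartz functions acts as the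
  Fourier multiplier exp(-t a). By density of the Schwartz space in L_p (p < \<infinity>),
  this determines S_t on L_p uniquely (up to a.e. equality).\<close>
definition is_elliptic_semigroup ::
  "real \<Rightarrow> (real^'n \<Rightarrow> complex) \<Rightarrow> (real \<Rightarrow> (real^'n \<Rightarrow> complex) \<Rightarrow> real^'n \<Rightarrow> complex) \<Rightarrow> bool" where
  "is_elliptic_semigroup p a S \<longleftrightarrow>
     (\<forall>t\<ge>0.
        (\<forall>f. in_Lp p f \<longrightarrow> in_Lp p (S t f)) \<and>
        (\<exists>M. \<forall>f g. in_Lp p f \<longrightarrow> in_Lp p g \<longrightarrow>
              Lp_norm p (\<lambda>x. S t f x - S t g x) \<le> M * Lp_norm p (\<lambda>x. f x - g x)) \<and>
        (\<forall>f. schwartz f \<longrightarrow>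
              S t f = fourier_inv (\<lambda>\<xi>. exp (- complex_of_real t * a \<xi>) * fourier f \<xi>)))"

definition thick :: "(real^'n) set \<Rightarrow> bool" where
  "thick E \<longleftrightarrow> E \<in> sets lebesgue \<and>
     (\<exists>\<rho> L. 0 < \<rho> \<and> \<rho> < 1 \<and> (\<forall>i. 0 < L $ i) \<and>
        (\<forall>x. measure lebesgue (E \<inter> box x (x + L)) \<ge> \<rho> * (\<Prod>i\<in>UNIV. L $ i)))"

end

theory Submission
  imports Defs "HOL-Probability.Probability"
begin

text \<open>
  Test the observability inequality with the Gaussians g_y(x) = exp (-|x - y|^2 / (2 l^2)).
  The semigroup acts on them through a single kernel: S_t g_y (x) is a constant multiple of
  V_t (x - y), where V_t is the inverse Fourier integral of exp (-t a(xi)) exp (-l^2 |xi|^2 / 2).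
  By homogeneity of a, l^d V_T(0) tends to a nonzero Gaussian integral as l grows, so for suitable l
  the function |S_T g_y| is bounded below on a ball around y and the left-hand side of the
  inequality is bounded below independently of y.  On the other hand V_t is bounded and decays
  like the product of min (1, w_b^-2) over the coordinates w_b, uniformly for t in [0, T].  If E
  is not thick, it has arbitrarily small density in cubes of arbitrarily large side; centring
  g_y in such a cube makes the L_p(E) norms of S_t g_y uniformly small, which contradicts
  observability.
\<close>

section \<open>Complex polynomial functions on a real inner product space\<close>

inductive complex_polynomial_function :: "('a::real_inner \<Rightarrow> complex) \<Rightarrow> bool" where
  const: "complex_polynomial_function (\<lambda>x. c)"
| inner: "complex_polynomial_function (\<lambda>x. complex_of_real (x \<bullet> b))"
| add: "complex_polynomial_function P \<Longrightarrow> complex_polynomial_function Q \<Longrightarrow>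
    complex_polynomial_function (\<lambda>x. P x + Q x)"
| mult: "complex_polynomial_function P \<Longrightarrow> complex_polynomial_function Q \<Longrightarrow>
    complex_polynomial_function (\<lambda>x. P x * Q x)"

lemma complex_polynomial_function_sum:
  "finite A \<Longrightarrow> (\<And>i. i \<in> A \<Longrightarrow> complex_polynomial_function (P i)) \<Longrightarrow>
    complex_polynomial_function (\<lambda>x. \<Sum>i\<in>A. P i x)"
  by (induction A rule: finite_induct) (auto intro: complex_polynomial_function.intros)

lemma complex_polynomial_function_prod:
  "finite A \<Longrightarrow> (\<And>i. i \<in> A \<Longrightarrow> complex_polynomial_function (P i)) \<Longrightarrow>
    complex_polynomial_function (\<lambda>x. \<Prod>i\<in>A. P i x)"
  by (induction A rule: finite_induct) (auto intro: complex_polynomial_function.intros)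

lemma complex_polynomial_function_power:
  "complex_polynomial_function P \<Longrightarrow> complex_polynomial_function (\<lambda>x. P x ^ n)"
  by (induction n) (auto intro: complex_polynomial_function.intros)

lemma complex_polynomial_function_diff:
  assumes "complex_polynomial_function P" "complex_polynomial_function Q"
  shows "complex_polynomial_function (\<lambda>x. P x - Q x)"
proof -
  have "complex_polynomial_function (\<lambda>x. P x + (-1) * Q x)"
    by (intro complex_polynomial_function.intros assms)
  then show ?thesis by simp
qed

lemma complex_polynomial_function_norm_diff_square:
  "complex_polynomial_function (\<lambda>x::'a::euclidean_space. complex_of_real (norm (x - y) ^ 2))"
proof -
  have "complex_of_real (norm (x - y) ^ 2) =
      (\<Sum>b\<in>Basis. (complex_of_real (x \<bullet> b) - complex_of_real (y \<bullet> b)) ^ 2)" for x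
  proof -
    have "norm (x - y) ^ 2 = (\<Sum>b\<in>Basis. ((x - y) \<bullet> b) ^ 2)"
      by (subst power2_norm_eq_inner, subst euclidean_inner) (simp add: power2_eq_square)
    then show ?thesis by (simp add: inner_diff_left)
  qed
  then show ?thesis
    by (simp only:) (intro complex_polynomial_function_sum complex_polynomial_function_power
        complex_polynomial_function_diff complex_polynomial_function.intros finite_Basis)
qed

lemma continuous_on_complex_polynomial_function:
  "complex_polynomial_function P \<Longrightarrow> continuous_on UNIV P"
  by (induction rule: complex_polynomial_function.induct) (auto intro!: continuous_intros)

lemma complex_polynomial_function_snd:
  assumes "complex_polynomial_function P"
  shows "complex_polynomial_function (\<lambda>z::'b::real_inner \<times> 'a::real_inner. P (snd z))"
  using assms
proof induction
  case (inner b)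
  have "complex_polynomial_function (\<lambda>z::'b \<times> 'a. complex_of_real (z \<bullet> (0, b)))"
    by (rule complex_polynomial_function.inner)
  then show ?case by (simp add: inner_prod_def)
qed (auto intro: complex_polynomial_function.intros)

lemma complex_polynomial_function_line_derivative:
  assumes "complex_polynomial_function P"
  shows "\<exists>P'. complex_polynomial_function P' \<and>
    (\<forall>z s. ((\<lambda>s. P (z + s *\<^sub>R v)) has_vector_derivative P' (z + s *\<^sub>R v)) (at s))"
  using assms
proof induction
  case (const c)
  show ?case
    by (intro exI[of _ "\<lambda>x. 0"]) (auto intro: complex_polynomial_function.intros derivative_eq_intros)
next
  case (inner b)
  have "((\<lambda>s. (z + s *\<^sub>R v) \<bullet> b) has_real_derivative (v \<bullet> b)) (at s)" for z s
    by (auto intro!: derivative_eq_intros simp: inner_add_left)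
  then show ?case
    by (intro exI[of _ "\<lambda>x. complex_of_real (v \<bullet> b)"])
       (auto intro: complex_polynomial_function.intros has_vector_derivative_of_real)
next
  case (add P Q)
  then obtain P' Q' where "complex_polynomial_function P'" "complex_polynomial_function Q'"
    and "\<And>z s. ((\<lambda>s. P (z + s *\<^sub>R v)) has_vector_derivative P' (z + s *\<^sub>R v)) (at s)"
    and "\<And>z s. ((\<lambda>s. Q (z + s *\<^sub>R v)) has_vector_derivative Q' (z + s *\<^sub>R v)) (at s)" by blast
  then show ?case
    by (intro exI[of _ "\<lambda>x. P' x + Q' x"] conjI allI complex_polynomial_function.intros
        has_vector_derivative_add)
next
  case (mult P Q)
  then obtain P' Q' where "complex_polynomial_function P'" "complex_polynomial_function Q'"
    and "\<And>z s. ((\<lambda>s. P (z + s *\<^sub>R v)) has_vector_derivative P' (z + s *\<^sub>R v)) (at s)"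
    and "\<And>z s. ((\<lambda>s. Q (z + s *\<^sub>R v)) has_vector_derivative Q' (z + s *\<^sub>R v)) (at s)" by blast
  then show ?case
    by (intro exI[of _ "\<lambda>x. P x * Q' x + P' x * Q x"] conjI allI complex_polynomial_function.intros
        has_vector_derivative_mult mult.hyps) auto
qed

lemma has_vector_derivative_cexp:
  assumes "(q has_vector_derivative q') (at s)"
  shows "((\<lambda>s. exp (q s :: complex)) has_vector_derivative q' * exp (q s)) (at s)"
  using field_vector_diff_chain_at[OF assms DERIV_exp] by (simp add: comp_def)

lemma polynomial_times_exp_line_derivative:
  assumes "complex_polynomial_function P" "complex_polynomial_function Q"
  shows "\<exists>P'. complex_polynomial_function P' \<and> (\<forall>z s.
    ((\<lambda>s. P (z + s *\<^sub>R v) * exp (Q (z + s *\<^sub>R v))) has_vector_derivative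
      P' (z + s *\<^sub>R v) * exp (Q (z + s *\<^sub>R v))) (at s))"
proof -
  obtain P' where P': "complex_polynomial_function P'"
    "\<And>z s. ((\<lambda>s. P (z + s *\<^sub>R v)) has_vector_derivative P' (z + s *\<^sub>R v)) (at s)"
    using complex_polynomial_function_line_derivative[OF assms(1)] by blast
  obtain Q' where Q': "complex_polynomial_function Q'"
    "\<And>z s. ((\<lambda>s. Q (z + s *\<^sub>R v)) has_vector_derivative Q' (z + s *\<^sub>R v)) (at s)"
    using complex_polynomial_function_line_derivative[OF assms(2)] by blast
  have "((\<lambda>s. P (z + s *\<^sub>R v) * exp (Q (z + s *\<^sub>R v))) has_vector_derivative
      P (z + s *\<^sub>R v) * (Q' (z + s *\<^sub>R v) * exp (Q (z + s *\<^sub>R v))) +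
      P' (z + s *\<^sub>R v) * exp (Q (z + s *\<^sub>R v))) (at s)" for z s
    by (intro has_vector_derivative_mult P' has_vector_derivative_cexp Q')
  then show ?thesis
    by (intro exI[of _ "\<lambda>x. P x * Q' x + P' x"] conjI allI complex_polynomial_function.intros P' Q' assms)
       (auto simp: algebra_simps)
qed

lemma polynomial_times_exp_iterated_line_derivatives:
  assumes "complex_polynomial_function Q"
  obtains Ps where "Ps 0 = (\<lambda>_. 1)" "\<And>k. complex_polynomial_function (Ps k)"
    "\<And>k z s. ((\<lambda>s. Ps k (z + s *\<^sub>R v) * exp (Q (z + s *\<^sub>R v))) has_vector_derivative
        Ps (Suc k) (z + s *\<^sub>R v) * exp (Q (z + s *\<^sub>R v))) (at s)"
proof -
  define next_poly where "next_poly P = (SOME P'. complex_polynomial_function P' \<and> (\<forall>z s.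
    ((\<lambda>s. P (z + s *\<^sub>R v) * exp (Q (z + s *\<^sub>R v))) has_vector_derivative
      P' (z + s *\<^sub>R v) * exp (Q (z + s *\<^sub>R v))) (at s)))" for P
  have next_poly: "complex_polynomial_function (next_poly P) \<and> (\<forall>z s.
    ((\<lambda>s. P (z + s *\<^sub>R v) * exp (Q (z + s *\<^sub>R v))) has_vector_derivative
      next_poly P (z + s *\<^sub>R v) * exp (Q (z + s *\<^sub>R v))) (at s))"
    if "complex_polynomial_function P" for P
    unfolding next_poly_def by (rule someI_ex[OF polynomial_times_exp_line_derivative[OF that assms]])
  define Ps where "Ps k = (next_poly ^^ k) (\<lambda>_. 1)" for k
  have poly: "complex_polynomial_function (Ps k)" for k
    by (induction k) (auto simp: Ps_def intro: complex_polynomial_function.const next_poly[THEN conjunct1])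
  show ?thesis
  proof (rule that)
    show "Ps 0 = (\<lambda>_. 1)" by (simp add: Ps_def)
    show "complex_polynomial_function (Ps k)" for k by (rule poly)
    show "((\<lambda>s. Ps k (z + s *\<^sub>R v) * exp (Q (z + s *\<^sub>R v))) has_vector_derivative
        Ps (Suc k) (z + s *\<^sub>R v) * exp (Q (z + s *\<^sub>R v))) (at s)" for k z s
      using next_poly[OF poly[of k]] by (simp add: Ps_def)
  qed
qed

lemma abs_le_one_plus_square: "\<bar>x::real\<bar> \<le> 1 + x ^ 2"
  using sum_squares_ge_zero[of "\<bar>x\<bar> - 1" 0] by (simp add: power2_eq_square algebra_simps)

lemma complex_polynomial_function_growth:
  assumes "complex_polynomial_function P"
  obtains C k where "0 \<le> C" "\<And>x. cmod (P x) \<le> C * (1 + norm x ^ 2) ^ k"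
  using assms
proof (induction arbitrary: thesis)
  case (const c)
  then show ?case by (metis norm_ge_zero power_0 mult_1_right order_refl)
next
  case (inner b)
  have "cmod (complex_of_real (x \<bullet> b)) \<le> norm b * (1 + norm x ^ 2) ^ 1" for x
  proof -
    have "\<bar>x \<bullet> b\<bar> \<le> norm b * norm x" using Cauchy_Schwarz_ineq2[of x b] by (simp add: mult.commute)
    also have "\<dots> \<le> norm b * (1 + norm x ^ 2)"
      using abs_le_one_plus_square[of "norm x"] by (intro mult_left_mono) auto
    finally show ?thesis by simp
  qed
  then show ?case by (intro inner.prems[of "norm b" 1]) auto
next
  case (add P Q)
  obtain C1 k1 C2 k2 where C: "0 \<le> C1" "\<And>x. cmod (P x) \<le> C1 * (1 + norm x ^ 2) ^ k1"
    "0 \<le> C2" "\<And>x. cmod (Q x) \<le> C2 * (1 + norm x ^ 2) ^ k2"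
    using add.IH by metis
  have "cmod (P x + Q x) \<le> (C1 + C2) * (1 + norm x ^ 2) ^ (k1 + k2)" for x
  proof -
    have "(1 + norm x ^ 2) ^ k1 \<le> (1 + norm x ^ 2) ^ (k1 + k2)"
      "(1 + norm x ^ 2) ^ k2 \<le> (1 + norm x ^ 2) ^ (k1 + k2)"
      by (intro power_increasing; simp)+
    then have "C1 * (1 + norm x ^ 2) ^ k1 + C2 * (1 + norm x ^ 2) ^ k2 \<le>
        (C1 + C2) * (1 + norm x ^ 2) ^ (k1 + k2)"
      using C(1,3) by (simp add: distrib_right add_mono mult_left_mono)
    then show ?thesis using norm_triangle_ineq[of "P x" "Q x"] C(2)[of x] C(4)[of x] by linarith
  qed
  then show ?case using C(1,3) by (intro add.prems[of "C1 + C2" "k1 + k2"]) auto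
next
  case (mult P Q)
  obtain C1 k1 C2 k2 where C: "0 \<le> C1" "\<And>x. cmod (P x) \<le> C1 * (1 + norm x ^ 2) ^ k1"
    "0 \<le> C2" "\<And>x. cmod (Q x) \<le> C2 * (1 + norm x ^ 2) ^ k2"
    using mult.IH by metis
  have "cmod (P x * Q x) \<le> (C1 * C2) * (1 + norm x ^ 2) ^ (k1 + k2)" for x
  proof -
    have "cmod (P x * Q x) \<le> (C1 * (1 + norm x ^ 2) ^ k1) * (C2 * (1 + norm x ^ 2) ^ k2)"
      unfolding norm_mult by (intro mult_mono C) (auto intro!: mult_nonneg_nonneg C)
    then show ?thesis by (simp add: power_add algebra_simps)
  qed
  then show ?case using C(1,3) by (intro mult.prems[of "C1 * C2" "k1 + k2"]) auto
qed

lemma power_times_exp_bounded: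
  fixes c :: real
  assumes "c > 0"
  obtains M where "\<And>s. s \<ge> 0 \<Longrightarrow> (1 + s) ^ k * exp (- c * s) \<le> M"
proof (cases "k = 0")
  case True
  then show ?thesis using assms by (intro that[of 1]) auto
next
  case False
  define A where "A = max 1 (real k / c)"
  have "(1 + s) ^ k * exp (- c * s) \<le> A ^ k" if "s \<ge> 0" for s
  proof -
    have "1 + s \<le> A * (1 + c * s / k)"
    proof -
      have "real k / c \<le> A" by (simp add: A_def)
      then have "1 \<le> A * c / k" using False assms by (simp add: field_simps)
      then have "s \<le> (A * c / k) * s" using mult_right_mono[OF _ that] by fastforce
      then show ?thesis by (simp add: A_def distrib_left)
    qed
    then have "(1 + s) ^ k \<le> A ^ k * (1 + c * s / k) ^ k"
      using that assms by (simp flip: power_mult_distrib add: power_mono)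
    also have "\<dots> \<le> A ^ k * exp (c * s)"
      using that assms False by (intro mult_left_mono exp_ge_one_plus_x_over_n_power_n)
         (auto simp: A_def intro: order.trans[of _ 0])
    finally show ?thesis by (simp add: mult_le_cancel_right1 exp_minus field_simps)
  qed
  then show ?thesis by (rule that)
qed

lemma bounded_polynomial_times_gaussian_decay:
  fixes y :: "'a::euclidean_space"
  assumes "complex_polynomial_function R" "c > 0" "\<And>x. Re (Q x) \<le> - c * norm (x - y) ^ 2"
  shows "bounded (range (\<lambda>x. R x * exp (Q x)))"
proof -
  obtain C k where C: "0 \<le> C" "\<And>x. cmod (R x) \<le> C * (1 + norm x ^ 2) ^ k"
    using complex_polynomial_function_growth[OF assms(1)] by blast
  obtain M where M: "\<And>s. s \<ge> 0 \<Longrightarrow> (1 + s) ^ k * exp (- (c/2) * s) \<le> M"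
    using power_times_exp_bounded[of "c/2" k] assms(2) by auto
  have "cmod (R x * exp (Q x)) \<le> C * (2 * (1 + norm y ^ 2)) ^ k * M" for x
  proof -
    have "norm x ^ 2 \<le> (norm (x - y) + norm y) ^ 2"
      by (metis norm_triangle_sub add.commute norm_ge_zero power_mono)
    also have "\<dots> \<le> 2 * norm (x - y) ^ 2 + 2 * norm y ^ 2"
      using sum_squares_ge_zero[of "norm (x-y) - norm y" 0] by (simp add: power2_eq_square algebra_simps)
    finally have n: "1 + norm x ^ 2 \<le> (2 * (1 + norm y ^ 2)) * (1 + norm (x - y) ^ 2)"
      by (simp add: algebra_simps) (smt (verit) mult_nonneg_nonneg zero_le_power2)
    have "cmod (R x * exp (Q x)) = cmod (R x) * exp (Re (Q x))" by (simp add: norm_mult)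
    also have "\<dots> \<le> C * (1 + norm x ^ 2) ^ k * exp (- c * norm (x - y) ^ 2)"
      by (intro mult_mono C) (use assms(3) C(1) in auto)
    also have "\<dots> \<le> C * ((2 * (1 + norm y ^ 2)) * (1 + norm (x - y) ^ 2)) ^ k * exp (- c * norm (x - y) ^ 2)"
      by (intro mult_right_mono mult_left_mono power_mono n C) auto
    also have "\<dots> = C * (2 * (1 + norm y ^ 2)) ^ k *
        ((1 + norm (x - y) ^ 2) ^ k * exp (- c * norm (x - y) ^ 2))"
      by (simp add: power_mult_distrib)
    also have "(1 + norm (x - y) ^ 2) ^ k * exp (- c * norm (x - y) ^ 2) \<le>
        (1 + norm (x - y) ^ 2) ^ k * exp (- (c/2) * norm (x - y) ^ 2)"
      using assms(2) by (intro mult_left_mono) auto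
    also have "\<dots> \<le> M" by (rule M) simp
    finally show ?thesis using C(1) by (simp add: mult_left_mono)
  qed
  then show ?thesis by (intro boundedI) auto
qed

section \<open>Gaussians and their Fourier transforms\<close>

definition gaussian :: "real \<Rightarrow> 'a::euclidean_space \<Rightarrow> 'a \<Rightarrow> complex" where
  "gaussian l y x = exp (complex_of_real (- (norm (x - y) ^ 2) / (2 * l ^ 2)))"

lemma complex_polynomial_function_gaussian_exponent:
  "complex_polynomial_function (\<lambda>x::'a::euclidean_space. complex_of_real (- (norm (x - y) ^ 2) / (2 * l ^ 2)))"
proof -
  have "complex_polynomial_function
      (\<lambda>x::'a. complex_of_real (- 1 / (2 * l ^ 2)) * complex_of_real (norm (x - y) ^ 2))"
    by (intro complex_polynomial_function.intros complex_polynomial_function_norm_diff_square)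
  then show ?thesis by (simp add: field_simps)
qed

lemma iter_pderiv_polynomial_times_exp:
  assumes "complex_polynomial_function P" "complex_polynomial_function Q"
  shows "\<exists>P'. complex_polynomial_function P' \<and>
    iter_pderiv is (\<lambda>x. P x * exp (Q x)) = (\<lambda>x. P' x * exp (Q x))"
proof (induction "is")
  case Nil
  then show ?case using assms by auto
next
  case (Cons i "is")
  then obtain P1 where P1: "complex_polynomial_function P1"
    "iter_pderiv is (\<lambda>x. P x * exp (Q x)) = (\<lambda>x. P1 x * exp (Q x))" by blast
  obtain P2 where P2: "complex_polynomial_function P2"
    "\<And>z s. ((\<lambda>s. P1 (z + s *\<^sub>R axis i 1) * exp (Q (z + s *\<^sub>R axis i 1)))
       has_vector_derivative P2 (z + s *\<^sub>R axis i 1) * exp (Q (z + s *\<^sub>R axis i 1))) (at s)"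
    using polynomial_times_exp_line_derivative[OF P1(1) assms(2)] by blast
  have "pderiv_dir i (\<lambda>x. P1 x * exp (Q x)) = (\<lambda>x. P2 x * exp (Q x))"
    unfolding pderiv_dir_def using vector_derivative_at[OF P2(2)[of _ 0]] by simp
  then show ?case using P1 P2 by auto
qed

lemma schwartz_gaussian:
  assumes "l > 0"
  shows "schwartz (gaussian l (y::real^'n))"
proof -
  let ?Q = "\<lambda>x::real^'n. complex_of_real (- (norm (x - y) ^ 2) / (2 * l ^ 2))"
  have g: "gaussian l y = (\<lambda>x. 1 * exp (?Q x))" by (simp add: gaussian_def[abs_def])
  have P: "\<exists>P'. complex_polynomial_function P' \<and>
      iter_pderiv is (gaussian l y) = (\<lambda>x. P' x * exp (?Q x))" for "is"
    unfolding g by (rule iter_pderiv_polynomial_times_exp[OF complex_polynomial_function.const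
        complex_polynomial_function_gaussian_exponent])
  show ?thesis unfolding schwartz_def
  proof (intro conjI allI)
    fix "is" x i
    obtain P' where P': "complex_polynomial_function P'"
      "iter_pderiv is (gaussian l y) = (\<lambda>x. P' x * exp (?Q x))"
      using P by blast
    obtain P2 where "((\<lambda>s. P' (x + s *\<^sub>R axis i 1) * exp (?Q (x + s *\<^sub>R axis i 1)))
       has_vector_derivative P2 (x + 0 *\<^sub>R axis i 1) * exp (?Q (x + 0 *\<^sub>R axis i 1))) (at 0)"
      using polynomial_times_exp_line_derivative[OF P'(1) complex_polynomial_function_gaussian_exponent]
      by blast
    then show "(\<lambda>t. iter_pderiv is (gaussian l y) (x + t *\<^sub>R axis i 1)) differentiable at 0"
      unfolding P'(2) by (rule differentiableI_vector)
  next
    fix "is" and \<beta> :: "'n \<Rightarrow> nat"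
    obtain P' where P': "complex_polynomial_function P'"
      "iter_pderiv is (gaussian l y) = (\<lambda>x. P' x * exp (?Q x))"
      using P by blast
    have "complex_polynomial_function
        (\<lambda>x::real^'n. (\<Prod>i\<in>UNIV. complex_of_real (x \<bullet> axis i 1) ^ \<beta> i) * P' x)"
      by (intro complex_polynomial_function.intros complex_polynomial_function_prod
          complex_polynomial_function_power P') auto
    then have "complex_polynomial_function
        (\<lambda>x::real^'n. complex_of_real (\<Prod>i\<in>UNIV. (x $ i) ^ \<beta> i) * P' x)"
      by (simp add: inner_axis)
    then have "bounded (range (\<lambda>x. (complex_of_real (\<Prod>i\<in>UNIV. (x $ i) ^ \<beta> i) * P' x) * exp (?Q x)))"
      by (rule bounded_polynomial_times_gaussian_decay[of _ "1 / (2 * l^2)" _ y]) (use assms in auto)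
    then show "bounded (range (\<lambda>x. complex_of_real (\<Prod>i\<in>UNIV. (x $ i) ^ \<beta> i) * iter_pderiv is (gaussian l y) x))"
      unfolding P'(2) by (simp add: mult.assoc)
  qed
qed

lemma lborel_integral_prod_Basis:
  fixes f :: "'a::euclidean_space \<Rightarrow> real \<Rightarrow> 'b::{real_normed_field,banach,second_countable_topology}"
  assumes int: "\<And>b. b \<in> Basis \<Longrightarrow> integrable lborel (f b)"
  shows "integrable lborel (\<lambda>x::'a. \<Prod>b\<in>Basis. f b (x \<bullet> b))"
    "(\<integral>x. (\<Prod>b\<in>Basis. f b (x \<bullet> b)) \<partial>lborel) = (\<Prod>b\<in>Basis. (\<integral>x. f b x \<partial>lborel))"
proof -
  interpret finite_product_sigma_finite "\<lambda>_. lborel" "Basis::'a set" by standard simp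
  have m[measurable]: "(\<lambda>g. \<Sum>b\<in>Basis. g b *\<^sub>R b) \<in> (\<Pi>\<^sub>M b\<in>(Basis::'a set). lborel) \<rightarrow>\<^sub>M borel"
    by measurable
  have [measurable]: "\<And>b. b \<in> Basis \<Longrightarrow> f b \<in> borel_measurable borel"
    using borel_measurable_integrable[OF int] by simp
  have eq: "(\<Prod>b\<in>Basis. f b ((\<Sum>b'\<in>Basis. g b' *\<^sub>R b') \<bullet> b)) = (\<Prod>b\<in>(Basis::'a set). f b (g b))" for g
    by (intro prod.cong refl) (simp add: inner_sum_left inner_Basis if_distrib cong: if_cong)
  have "integrable (\<Pi>\<^sub>M b\<in>(Basis::'a set). lborel) (\<lambda>g. \<Prod>b\<in>Basis. f b (g b))"
    by (rule product_integrable_prod) (auto intro: int)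
  then show "integrable lborel (\<lambda>x::'a. \<Prod>b\<in>Basis. f b (x \<bullet> b))"
    by (subst lborel_eq, subst integrable_distr_eq[OF m]) (simp_all add: eq)
  have "(\<integral>g. (\<Prod>b\<in>Basis. f b (g b)) \<partial>(\<Pi>\<^sub>M b\<in>(Basis::'a set). lborel)) = (\<Prod>b\<in>Basis. (\<integral>x. f b x \<partial>lborel))"
    by (rule product_integral_prod) (auto intro: int)
  then show "(\<integral>x. (\<Prod>b\<in>Basis. f b (x \<bullet> b)) \<partial>lborel) = (\<Prod>b\<in>Basis. (\<integral>x. f b x \<partial>lborel))"
    by (subst lborel_eq, subst integral_distr[OF m]) (simp_all add: eq)
qed

lemma integral_std_normal_density_iexp:
  "integrable lborel (\<lambda>s. std_normal_density s *\<^sub>R iexp (t * s))"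
  "(\<integral>s. std_normal_density s *\<^sub>R iexp (t * s) \<partial>lborel) = complex_of_real (exp (- (t^2) / 2))"
proof -
  show "integrable lborel (\<lambda>s. std_normal_density s *\<^sub>R iexp (t * s))"
    by (rule Bochner_Integration.integrable_bound[OF integrable_normal_density]) (auto simp: norm_mult)
  have "char std_normal_distribution t = complex_of_real (exp (- (t^2) / 2))"
    by (simp add: char_std_normal_distribution)
  then show "(\<integral>s. std_normal_density s *\<^sub>R iexp (t * s) \<partial>lborel) = complex_of_real (exp (- (t^2) / 2))"
    unfolding char_def by (subst (asm) integral_density) auto
qed

lemma gaussian_1d_fourier_integral:
  fixes l a w :: real
  assumes "l > 0"
  defines "F \<equiv> (\<lambda>s. exp (complex_of_real (- ((s - a)^2) / (2 * l^2))) * exp (- \<i> * complex_of_real (w * s)))"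
  shows "integrable lborel F"
    "(\<integral>s. F s \<partial>lborel) = complex_of_real (l * sqrt (2 * pi)) * exp (- \<i> * complex_of_real (w * a)) *
        complex_of_real (exp (- (l^2 * w^2) / 2))"
proof -
  let ?c = "complex_of_real (sqrt (2 * pi)) * exp (- \<i> * complex_of_real (w * a))"
  have eq: "F (a + l * s) = ?c * (std_normal_density s *\<^sub>R iexp ((- w * l) * s))" for s
  proof -
    have "F (a + l * s) = exp (complex_of_real (- (s^2) / 2)) * exp (- \<i> * complex_of_real (w * a)) * iexp ((- w * l) * s)"
      using assms(1) by (simp add: F_def power_mult_distrib exp_add[symmetric] algebra_simps)
    also have "exp (complex_of_real (- (s^2) / 2)) = complex_of_real (sqrt (2 * pi)) * complex_of_real (std_normal_density s)"
    proof -
      have "exp (complex_of_real (- (s^2) / 2)) = complex_of_real (exp (- (s^2) / 2))" by (rule exp_of_real)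
      also have "exp (- (s^2) / 2) = sqrt (2 * pi) * std_normal_density s"
        by (simp add: std_normal_density_def)
      finally show ?thesis by simp
    qed
    finally show ?thesis by (simp add: scaleR_conv_of_real algebra_simps)
  qed
  have i1: "integrable lborel (\<lambda>s. F (a + l * s))"
    unfolding eq by (intro integrable_mult_right integral_std_normal_density_iexp)
  show "integrable lborel F"
    using i1 lborel_integrable_real_affine_iff[of l F a] assms(1) by simp
  have "(\<integral>s. F s \<partial>lborel) = \<bar>l\<bar> *\<^sub>R (\<integral>s. F (a + l * s) \<partial>lborel)"
    by (rule lborel_integral_real_affine) (use assms in simp)
  also have "(\<integral>s. F (a + l * s) \<partial>lborel) = ?c * (\<integral>s. std_normal_density s *\<^sub>R iexp ((- w * l) * s) \<partial>lborel)"
    unfolding eq by (rule integral_mult_right_zero)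
  also have "\<dots> = ?c * complex_of_real (exp (- ((- w * l)^2) / 2))"
    by (simp only: integral_std_normal_density_iexp(2))
  finally show "(\<integral>s. F s \<partial>lborel) = complex_of_real (l * sqrt (2 * pi)) * exp (- \<i> * complex_of_real (w * a)) *
        complex_of_real (exp (- (l^2 * w^2) / 2))"
    using assms(1) by (simp add: scaleR_conv_of_real power_mult_distrib algebra_simps)
qed

lemma gaussian_times_exp_eq_prod_Basis:
  fixes x y \<xi> :: "'a::euclidean_space"
  shows "gaussian l y x * exp (- \<i> * complex_of_real (\<xi> \<bullet> x)) =
    (\<Prod>b\<in>Basis. exp (complex_of_real (- ((x \<bullet> b - y \<bullet> b)^2) / (2 * l^2))) * exp (- \<i> * complex_of_real ((\<xi> \<bullet> b) * (x \<bullet> b))))"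
proof -
  have n: "norm (x - y) ^ 2 = (\<Sum>b\<in>Basis. (x \<bullet> b - y \<bullet> b) ^ 2)"
    by (subst power2_norm_eq_inner, subst euclidean_inner) (simp add: power2_eq_square inner_diff_left)
  have i: "\<xi> \<bullet> x = (\<Sum>b\<in>Basis. (\<xi> \<bullet> b) * (x \<bullet> b))"
    by (subst euclidean_inner) simp
  have "gaussian l y x = (\<Prod>b\<in>Basis. exp (complex_of_real (- ((x \<bullet> b - y \<bullet> b)^2) / (2 * l^2))))"
    unfolding gaussian_def n by (simp add: exp_sum[symmetric] sum_divide_distrib sum_negf)
  moreover have "exp (- \<i> * complex_of_real (\<xi> \<bullet> x)) = (\<Prod>b\<in>Basis. exp (- \<i> * complex_of_real ((\<xi> \<bullet> b) * (x \<bullet> b))))"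
    unfolding i by (simp add: exp_sum[symmetric] sum_distrib_left)
  ultimately show ?thesis by (simp add: prod.distrib)
qed

lemma gaussian_fourier_integral:
  fixes y \<xi> :: "'a::euclidean_space"
  assumes "l > 0"
  shows "integrable lborel (\<lambda>x. gaussian l y x * exp (- \<i> * complex_of_real (\<xi> \<bullet> x)))"
    "(\<integral>x. gaussian l y x * exp (- \<i> * complex_of_real (\<xi> \<bullet> x)) \<partial>lborel) =
      complex_of_real ((l * sqrt (2 * pi)) ^ DIM('a)) * exp (- \<i> * complex_of_real (\<xi> \<bullet> y)) *
      complex_of_real (exp (- (l^2 * norm \<xi> ^ 2) / 2))"
proof -
  define F where "F b s = exp (complex_of_real (- ((s - y \<bullet> b)^2) / (2 * l^2))) * exp (- \<i> * complex_of_real ((\<xi> \<bullet> b) * s))" for b s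
  have eq: "gaussian l y x * exp (- \<i> * complex_of_real (\<xi> \<bullet> x)) = (\<Prod>b\<in>Basis. F b (x \<bullet> b))" for x
    unfolding gaussian_times_exp_eq_prod_Basis F_def by simp
  have intF: "integrable lborel (F b)" for b
    unfolding F_def by (rule gaussian_1d_fourier_integral(1)[OF assms])
  show "integrable lborel (\<lambda>x. gaussian l y x * exp (- \<i> * complex_of_real (\<xi> \<bullet> x)))"
    unfolding eq by (rule lborel_integral_prod_Basis(1)) (rule intF)
  have "(\<integral>x. gaussian l y x * exp (- \<i> * complex_of_real (\<xi> \<bullet> x)) \<partial>lborel) = (\<Prod>b\<in>Basis. (\<integral>s. F b s \<partial>lborel))"
    unfolding eq by (rule lborel_integral_prod_Basis(2)) (rule intF)
  also have "\<dots> = (\<Prod>b\<in>(Basis::'a set). complex_of_real (l * sqrt (2 * pi)) * exp (- \<i> * complex_of_real ((\<xi> \<bullet> b) * (y \<bullet> b))) *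
        complex_of_real (exp (- (l^2 * (\<xi> \<bullet> b)^2) / 2)))"
    unfolding F_def by (intro prod.cong refl gaussian_1d_fourier_integral(2)[OF assms])
  also have "\<dots> = complex_of_real ((l * sqrt (2 * pi)) ^ DIM('a)) * exp (- \<i> * complex_of_real (\<xi> \<bullet> y)) *
      complex_of_real (exp (- (l^2 * norm \<xi> ^ 2) / 2))"
  proof -
    have n: "norm \<xi> ^ 2 = (\<Sum>b\<in>Basis. (\<xi> \<bullet> b) ^ 2)"
      by (subst power2_norm_eq_inner, subst euclidean_inner) (simp add: power2_eq_square)
    have i: "\<xi> \<bullet> y = (\<Sum>b\<in>Basis. (\<xi> \<bullet> b) * (y \<bullet> b))"
      by (subst euclidean_inner) simp
    have e1: "exp (- \<i> * complex_of_real (\<xi> \<bullet> y)) = (\<Prod>b\<in>(Basis::'a set). exp (- \<i> * complex_of_real ((\<xi> \<bullet> b) * (y \<bullet> b))))"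
      unfolding i by (simp add: exp_sum[symmetric] sum_distrib_left)
    have e2: "complex_of_real (exp (- (l^2 * norm \<xi> ^ 2) / 2)) = (\<Prod>b\<in>(Basis::'a set). complex_of_real (exp (- (l^2 * (\<xi> \<bullet> b)^2) / 2)))"
    proof -
      have "exp (- (l^2 * norm \<xi> ^ 2) / 2) = (\<Prod>b\<in>(Basis::'a set). exp (- (l^2 * (\<xi> \<bullet> b)^2) / 2))"
        unfolding n by (simp add: exp_sum[symmetric] sum_distrib_left sum_divide_distrib sum_negf)
      then show ?thesis by (simp add: of_real_prod)
    qed
    show ?thesis unfolding e1 e2 by (simp add: prod.distrib of_real_power)
  qed
  finally show "(\<integral>x. gaussian l y x * exp (- \<i> * complex_of_real (\<xi> \<bullet> x)) \<partial>lborel) =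
      complex_of_real ((l * sqrt (2 * pi)) ^ DIM('a)) * exp (- \<i> * complex_of_real (\<xi> \<bullet> y)) *
      complex_of_real (exp (- (l^2 * norm \<xi> ^ 2) / 2))" .
qed

lemma fourier_gaussian:
  fixes y \<xi> :: "real^'n"
  assumes "l > 0"
  shows "fourier (gaussian l y) \<xi> = complex_of_real (l ^ CARD('n)) * exp (- \<i> * complex_of_real (\<xi> \<bullet> y)) *
      complex_of_real (exp (- (l^2 * norm \<xi> ^ 2) / 2))"
proof -
  have "sqrt (2 * pi) ^ CARD('n) = ((2 * pi) powr (1/2)) ^ CARD('n)"
    by (simp add: powr_half_sqrt)
  also have "\<dots> = (2 * pi) powr (real CARD('n) / 2)"
    by (subst powr_power) auto
  finally have "(2 * pi) powr (- real CARD('n) / 2) * (l * sqrt (2 * pi)) ^ CARD('n) = l ^ CARD('n)"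
    by (simp add: power_mult_distrib powr_minus field_simps)
  then have "complex_of_real ((2 * pi) powr (- real CARD('n) / 2)) *
      complex_of_real ((l * sqrt (2 * pi)) ^ CARD('n)) = complex_of_real (l ^ CARD('n))"
    by (metis of_real_mult)
  then show ?thesis
    unfolding fourier_def gaussian_fourier_integral(2)[OF assms]
    by (simp only: DIM_cart DIM_real mult_1_right mult.assoc[symmetric])
qed

lemma continuous_on_gaussian: "continuous_on UNIV (gaussian l y)"
proof -
  have "gaussian l y = (\<lambda>x. exp (complex_of_real ((- 1 / (2 * l^2)) * norm (x - y) ^ 2)))"
    by (auto simp: gaussian_def fun_eq_iff)
  moreover have "continuous_on UNIV (\<lambda>x. exp (complex_of_real ((- 1 / (2 * l^2)) * norm (x - y) ^ 2)))"
    by (intro continuous_intros)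
  ultimately show ?thesis by simp
qed

lemma borel_measurable_gaussian[measurable]: "gaussian l y \<in> borel_measurable borel"
  by (rule borel_measurable_continuous_onI[OF continuous_on_gaussian])

lemma norm_gaussian: "cmod (gaussian l y x) = exp (- (norm (x - y) ^ 2) / (2 * l ^ 2))"
  unfolding gaussian_def by simp

lemma norm_gaussian_powr:
  assumes "p > 0"
  shows "cmod (gaussian l y x) powr p = cmod (gaussian (l / sqrt p) y x)"
  using assms by (simp add: norm_gaussian powr_def power_divide field_simps)

lemma integrable_gaussian:
  fixes y :: "'a::euclidean_space"
  assumes "l > 0"
  shows "integrable lborel (gaussian l y)"
  using gaussian_fourier_integral(1)[OF assms, of y 0] by simp

lemma in_Lp_gaussian:
  fixes y :: "real^'n"
  assumes "l > 0" "p > 0"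
  shows "in_Lp p (gaussian l y)"
  unfolding in_Lp_def
proof
  show "gaussian l y \<in> borel_measurable lebesgue"
    by (rule measurable_completion) simp
  have "integrable lborel (\<lambda>x. cmod (gaussian (l / sqrt p) y x))"
    by (intro integrable_norm integrable_gaussian) (use assms in auto)
  then have "integrable lborel (\<lambda>x. cmod (gaussian l y x) powr p)"
    by (simp add: norm_gaussian_powr[OF assms(2)])
  then show "integrable lebesgue (\<lambda>x. cmod (gaussian l y x) powr p)"
    by (rule integrable_completion[THEN iffD2, rotated]) simp
qed

section \<open>The damped kernel\<close>

lemma integrable_times_iexp:
  fixes F :: "'a::euclidean_space \<Rightarrow> complex"
  assumes "integrable lborel F"
  shows "integrable lborel (\<lambda>\<xi>. F \<xi> * iexp (\<xi> \<bullet> w))"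
proof (rule Bochner_Integration.integrable_bound[OF integrable_norm[OF assms]])
  have "(\<lambda>\<xi>::'a. iexp (\<xi> \<bullet> w)) \<in> borel_measurable borel"
    by (intro borel_measurable_continuous_onI continuous_intros)
  then show "(\<lambda>\<xi>. F \<xi> * iexp (\<xi> \<bullet> w)) \<in> borel_measurable lborel"
    using borel_measurable_integrable[OF assms] by measurable
qed (auto simp: norm_mult)

definition inv_fourier_integral :: "('a::euclidean_space \<Rightarrow> complex) \<Rightarrow> 'a \<Rightarrow> complex" where
  "inv_fourier_integral F w = (\<integral>\<xi>. F \<xi> * iexp (\<xi> \<bullet> w) \<partial>lborel)"

definition damped_multiplier :: "('a::euclidean_space \<Rightarrow> complex) \<Rightarrow> real \<Rightarrow> real \<Rightarrow> 'a \<Rightarrow> complex" where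
  "damped_multiplier a l t \<xi> = exp (- complex_of_real t * a \<xi>) * complex_of_real (exp (- (l^2 * norm \<xi> ^ 2) / 2))"

definition damped_kernel :: "('a::euclidean_space \<Rightarrow> complex) \<Rightarrow> real \<Rightarrow> real \<Rightarrow> 'a \<Rightarrow> complex" where
  "damped_kernel a l t = inv_fourier_integral (damped_multiplier a l t)"

lemma semigroup_gaussian:
  fixes y :: "real^'n"
  assumes "is_elliptic_semigroup p a S" "t \<ge> 0" "l > 0"
  shows "S t (gaussian l y) x =
    complex_of_real ((2 * pi) powr (- real CARD('n) / 2) * l ^ CARD('n)) * damped_kernel a l t (x - y)"
proof -
  have "S t (gaussian l y) = fourier_inv (\<lambda>\<xi>. exp (- complex_of_real t * a \<xi>) * fourier (gaussian l y) \<xi>)"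
    using assms(1,2) schwartz_gaussian[OF assms(3)] unfolding is_elliptic_semigroup_def by blast
  then have "S t (gaussian l y) x = complex_of_real ((2 * pi) powr (- real CARD('n) / 2)) *
     (\<integral>\<xi>. exp (- complex_of_real t * a \<xi>) * fourier (gaussian l y) \<xi> * iexp (\<xi> \<bullet> x) \<partial>lborel)"
    by (simp add: fourier_inv_def)
  also have "(\<lambda>\<xi>. exp (- complex_of_real t * a \<xi>) * fourier (gaussian l y) \<xi> * iexp (\<xi> \<bullet> x)) =
     (\<lambda>\<xi>. complex_of_real (l ^ CARD('n)) * (damped_multiplier a l t \<xi> * iexp (\<xi> \<bullet> (x - y))))"
  proof
    fix \<xi> :: "real^'n"
    have "exp (- \<i> * complex_of_real (\<xi> \<bullet> y)) * iexp (\<xi> \<bullet> x) = iexp (\<xi> \<bullet> (x - y))"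
      by (simp add: exp_add[symmetric] inner_diff_right algebra_simps)
    then show "exp (- complex_of_real t * a \<xi>) * fourier (gaussian l y) \<xi> * iexp (\<xi> \<bullet> x) =
      complex_of_real (l ^ CARD('n)) * (damped_multiplier a l t \<xi> * iexp (\<xi> \<bullet> (x - y)))"
      unfolding fourier_gaussian[OF assms(3)] damped_multiplier_def by (simp flip: \<open>_ = iexp _\<close> add: algebra_simps)
  qed
  finally show ?thesis
    by (simp add: damped_kernel_def inv_fourier_integral_def integral_mult_right_zero mult.assoc)
qed

text \<open>The exponent is a polynomial in (t, xi) jointly, so that bounds on its derivatives along
  lines are uniform in t.\<close>

definition damped_exponent :: "('a::euclidean_space \<Rightarrow> complex) \<Rightarrow> real \<Rightarrow> real \<times> 'a \<Rightarrow> complex" where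
  "damped_exponent a l z = - complex_of_real (fst z) * a (snd z) + complex_of_real (- (l^2 * norm (snd z) ^ 2) / 2)"

lemma damped_multiplier_eq_exp: "damped_multiplier a l t \<xi> = exp (damped_exponent a l (t, \<xi>))"
  by (simp only: damped_multiplier_def damped_exponent_def exp_add exp_of_real fst_conv snd_conv)

lemma complex_polynomial_function_damped_exponent:
  assumes "complex_polynomial_function a"
  shows "complex_polynomial_function (damped_exponent a l)"
proof -
  have t: "complex_polynomial_function (\<lambda>z::real \<times> 'a. complex_of_real (fst z))"
    using complex_polynomial_function.inner[of "(1::real, 0::'a)"] by (simp add: inner_prod_def)
  have n: "complex_polynomial_function (\<lambda>z::real \<times> 'a. complex_of_real (norm (snd z - 0) ^ 2))"
    by (rule complex_polynomial_function_snd[OF complex_polynomial_function_norm_diff_square])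
  have "complex_polynomial_function (\<lambda>z. (- 1) * complex_of_real (fst z) * a (snd z) +
      complex_of_real (- (l^2) / 2) * complex_of_real (norm (snd z - 0) ^ 2))"
    by (rule complex_polynomial_function.add[OF
        complex_polynomial_function.mult[OF complex_polynomial_function.mult[OF
          complex_polynomial_function.const t] complex_polynomial_function_snd[OF assms]]
        complex_polynomial_function.mult[OF complex_polynomial_function.const n]])
  then show ?thesis unfolding damped_exponent_def[abs_def] by simp
qed

lemma Re_damped_exponent_le:
  assumes "\<And>\<xi>. Re (a \<xi>) \<ge> 0" "t \<ge> 0"
  shows "Re (damped_exponent a l (t, \<xi>)) \<le> - (l^2 * norm \<xi> ^ 2) / 2"
  using assms mult_nonneg_nonneg[OF assms(2) assms(1)[of \<xi>]] by (simp add: damped_exponent_def)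

lemma continuous_on_damped_multiplier:
  assumes "complex_polynomial_function a"
  shows "continuous_on UNIV (damped_multiplier a l t)"
proof -
  have "continuous_on UNIV (\<lambda>\<xi>. damped_exponent a l (t, \<xi>))"
    by (rule continuous_on_compose2[of UNIV "damped_exponent a l"])
       (auto intro!: continuous_intros continuous_on_complex_polynomial_function
          complex_polynomial_function_damped_exponent assms)
  then show ?thesis unfolding damped_multiplier_eq_exp[abs_def] by (intro continuous_intros)
qed

lemma norm_damped_multiplier_le:
  assumes "\<And>\<xi>. Re (a \<xi>) \<ge> 0" "t \<ge> 0" "l > 0"
  shows "cmod (damped_multiplier a l t \<xi>) \<le> cmod (gaussian (1 / l) 0 \<xi>)"
  using Re_damped_exponent_le[OF assms(1,2), where l=l and \<xi>=\<xi>] assms(3)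
  by (simp add: damped_multiplier_eq_exp norm_gaussian power_divide field_simps)

lemma integrable_damped_multiplier:
  assumes "complex_polynomial_function a" "\<And>\<xi>. Re (a \<xi>) \<ge> 0" "t \<ge> 0" "l > 0"
  shows "integrable lborel (damped_multiplier a l t)"
proof (rule Bochner_Integration.integrable_bound[OF integrable_norm[OF integrable_gaussian[of "1/l" 0]]])
  show "damped_multiplier a l t \<in> borel_measurable lborel"
    using borel_measurable_continuous_onI[OF continuous_on_damped_multiplier[OF assms(1)]] by simp
qed (use assms in \<open>auto intro!: AE_I2 norm_damped_multiplier_le\<close>)

lemma norm_damped_kernel_le:
  fixes a :: "'a::euclidean_space \<Rightarrow> complex"
  assumes "complex_polynomial_function a" "\<And>\<xi>. Re (a \<xi>) \<ge> 0" "t \<ge> 0" "l > 0"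
  shows "cmod (damped_kernel a l t w) \<le> (\<integral>\<xi>. cmod (gaussian (1 / l) (0::'a) \<xi>) \<partial>lborel)"
proof -
  have "cmod (damped_kernel a l t w) \<le> (\<integral>\<xi>. norm (damped_multiplier a l t \<xi> * iexp (\<xi> \<bullet> w)) \<partial>lborel)"
    unfolding damped_kernel_def inv_fourier_integral_def by (rule integral_norm_bound)
  also have "\<dots> \<le> (\<integral>\<xi>. cmod (gaussian (1 / l) (0::'a) \<xi>) \<partial>lborel)"
    by (intro integral_mono integrable_norm integrable_times_iexp integrable_damped_multiplier assms
        integrable_gaussian) (use assms in \<open>auto simp: norm_mult intro!: norm_damped_multiplier_le\<close>)
  finally show ?thesis .
qed

lemma integrable_norm_times_gaussian:
  assumes "l > 0"
  shows "integrable lborel (\<lambda>\<xi>::'a::euclidean_space. norm \<xi> * cmod (gaussian l 0 \<xi>))"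
proof -
  obtain M where M: "\<And>s. s \<ge> 0 \<Longrightarrow> (1 + s) ^ 1 * exp (- (1 / (4 * l^2)) * s) \<le> M"
    using power_times_exp_bounded[of "1 / (4 * l^2)" 1] assms by auto
  show ?thesis
  proof (rule Bochner_Integration.integrable_bound)
    show "integrable lborel (\<lambda>\<xi>::'a. M * cmod (gaussian (sqrt 2 * l) 0 \<xi>))"
      by (intro integrable_mult_right integrable_norm integrable_gaussian) (use assms in simp)
    show "(\<lambda>\<xi>::'a. norm \<xi> * cmod (gaussian l 0 \<xi>)) \<in> borel_measurable lborel"
      by measurable
    have bound: "norm \<xi> * cmod (gaussian l 0 \<xi>) \<le> M * cmod (gaussian (sqrt 2 * l) 0 \<xi>)" for \<xi> :: 'a
    proof -
      define s where "s = norm \<xi> ^ 2"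
      have e: "cmod (gaussian l 0 \<xi>) = exp (- (1 / (4 * l^2)) * s) * exp (- (1 / (4 * l^2)) * s)"
        "cmod (gaussian (sqrt 2 * l) 0 \<xi>) = exp (- (1 / (4 * l^2)) * s)"
        using assms by (simp_all add: norm_gaussian s_def power_mult_distrib exp_add[symmetric] field_simps)
      have "norm \<xi> * cmod (gaussian l 0 \<xi>) \<le> ((1 + s) ^ 1 * exp (- (1 / (4 * l^2)) * s)) * exp (- (1 / (4 * l^2)) * s)"
        unfolding e(1) using abs_le_one_plus_square[of "norm \<xi>"] by (simp add: s_def mult.assoc mult_right_mono)
      also have "\<dots> \<le> M * cmod (gaussian (sqrt 2 * l) 0 \<xi>)"
        unfolding e(2) by (intro mult_right_mono M) (auto simp: s_def)
      finally show ?thesis .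
    qed
    then show "AE \<xi> in (lborel :: 'a measure). norm (norm \<xi> * cmod (gaussian l 0 \<xi>)) \<le> norm (M * cmod (gaussian (sqrt 2 * l) 0 \<xi>))"
      using order_trans[OF bound abs_ge_self] by (auto intro!: AE_I2)
  qed
qed

lemma damped_kernel_lipschitz:
  fixes a :: "'a::euclidean_space \<Rightarrow> complex"
  assumes "complex_polynomial_function a" "\<And>\<xi>. Re (a \<xi>) \<ge> 0" "l > 0" "t \<ge> 0"
  obtains \<Lambda> where "\<Lambda> \<ge> 0" "\<And>w. cmod (damped_kernel a l t w - damped_kernel a l t 0) \<le> \<Lambda> * norm w"
proof
  let ?G = "damped_multiplier a l t"
  define \<Lambda> where "\<Lambda> = (\<integral>\<xi>. norm \<xi> * cmod (gaussian (1 / l) (0::'a) \<xi>) \<partial>lborel)"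
  show "\<Lambda> \<ge> 0" unfolding \<Lambda>_def by (intro integral_nonneg_AE) auto
  have G: "integrable lborel ?G" by (rule integrable_damped_multiplier[OF assms(1,2,4,3)])
  fix w :: 'a
  have "cmod (damped_kernel a l t w - damped_kernel a l t 0) =
      cmod (\<integral>\<xi>. ?G \<xi> * (iexp (\<xi> \<bullet> w) - 1) \<partial>lborel)"
    unfolding damped_kernel_def inv_fourier_integral_def
    by (simp add: integrable_times_iexp[OF G] G right_diff_distrib flip: Bochner_Integration.integral_diff)
  also have "\<dots> \<le> (\<integral>\<xi>. norm w * (norm \<xi> * cmod (gaussian (1 / l) (0::'a) \<xi>)) \<partial>lborel)"
  proof (rule Bochner_Integration.integral_norm_bound_integral)
    show "integrable lborel (\<lambda>\<xi>. ?G \<xi> * (iexp (\<xi> \<bullet> w) - 1))"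
      using Bochner_Integration.integrable_diff[OF integrable_times_iexp[OF G] G]
      by (simp add: right_diff_distrib)
    show "integrable lborel (\<lambda>\<xi>. norm w * (norm \<xi> * cmod (gaussian (1 / l) (0::'a) \<xi>)))"
      using assms(3) by (intro integrable_mult_right integrable_norm_times_gaussian) simp
    fix \<xi> :: 'a
    have "cmod (iexp (\<xi> \<bullet> w) - 1) \<le> norm \<xi> * norm w"
      using iexp_approx1[of "\<xi> \<bullet> w" 0] Cauchy_Schwarz_ineq2[of \<xi> w] by simp
    moreover have "cmod (?G \<xi>) \<le> cmod (gaussian (1 / l) 0 \<xi>)"
      by (rule norm_damped_multiplier_le[OF assms(2,4,3)])
    ultimately have "cmod (?G \<xi>) * cmod (iexp (\<xi> \<bullet> w) - 1) \<le> cmod (gaussian (1 / l) 0 \<xi>) * (norm \<xi> * norm w)"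
      by (intro mult_mono) auto
    then show "norm (?G \<xi> * (iexp (\<xi> \<bullet> w) - 1)) \<le> norm w * (norm \<xi> * cmod (gaussian (1 / l) 0 \<xi>))"
      unfolding norm_mult by (simp add: mult_ac)
  qed
  also have "\<dots> = \<Lambda> * norm w" unfolding \<Lambda>_def by simp
  finally show "cmod (damped_kernel a l t w - damped_kernel a l t 0) \<le> \<Lambda> * norm w" .
qed

section \<open>Decay of the damped kernel\<close>

definition backward_diff :: "real \<Rightarrow> 'a::real_vector \<Rightarrow> ('a \<Rightarrow> 'b::ab_group_add) \<Rightarrow> 'a \<Rightarrow> 'b" where
  "backward_diff h e F \<xi> = F \<xi> - F (\<xi> - h *\<^sub>R e)"

lemma norm_diff_le_vector_derivative_bound:
  fixes f :: "real \<Rightarrow> 'a::real_normed_vector"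
  assumes "\<And>s. (f has_vector_derivative f' s) (at s)"
    and "\<And>s. a \<le> s \<Longrightarrow> s \<le> b \<Longrightarrow> norm (f' s) \<le> B" and "a \<le> b"
  shows "norm (f b - f a) \<le> B * (b - a)"
proof -
  have "norm (f b - f a) \<le> B * norm (b - a)"
  proof (rule differentiable_bound[where S="{a..b}" and f'="\<lambda>s d. d *\<^sub>R f' s"])
    show "(f has_derivative (\<lambda>d. d *\<^sub>R f' x)) (at x within {a..b})" for x
      using assms(1)[of x] by (simp add: has_vector_derivative_def has_derivative_at_withinI)
    show "onorm (\<lambda>d. d *\<^sub>R f' x) \<le> B" if "x \<in> {a..b}" for x
      using onorm_scaleR_left[OF bounded_linear_ident, of "f' x"] assms(2)[of x] that
      by (simp add: onorm_id)
  qed (use assms(3) in auto)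
  then show ?thesis using assms(3) by simp
qed

lemma norm_backward_diff_le:
  fixes f :: "real \<Rightarrow> 'a::real_normed_vector"
  assumes "\<And>s. (f has_vector_derivative f' s) (at s)"
    and "\<And>s. min (\<sigma> - h) \<sigma> \<le> s \<Longrightarrow> s \<le> max (\<sigma> - h) \<sigma> \<Longrightarrow> norm (f' s) \<le> B"
  shows "norm (backward_diff h 1 f \<sigma>) \<le> \<bar>h\<bar> * B"
proof (cases "h \<ge> 0")
  case True
  have "norm (f \<sigma> - f (\<sigma> - h)) \<le> B * (\<sigma> - (\<sigma> - h))"
    by (rule norm_diff_le_vector_derivative_bound[OF assms(1)]) (use assms(2) True in auto)
  then show ?thesis using True by (simp add: backward_diff_def mult.commute)
next
  case False
  have "norm (f (\<sigma> - h) - f \<sigma>) \<le> B * ((\<sigma> - h) - \<sigma>)"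
    by (rule norm_diff_le_vector_derivative_bound[OF assms(1)]) (use assms(2) False in auto)
  then show ?thesis using False by (simp add: backward_diff_def mult.commute norm_minus_commute)
qed

lemma has_vector_derivative_backward_diff:
  fixes f :: "real \<Rightarrow> 'a::real_normed_vector"
  assumes "\<And>s. (f has_vector_derivative f' s) (at s)"
  shows "(backward_diff h 1 f has_vector_derivative backward_diff h 1 f' s) (at s)"
proof -
  have "((f \<circ> (\<lambda>s. s - h)) has_vector_derivative (1 *\<^sub>R f' (s - h))) (at s)"
    by (rule vector_diff_chain_at) (auto intro!: derivative_eq_intros assms)
  then show ?thesis
    unfolding backward_diff_def by (intro has_vector_derivative_diff assms) (simp add: comp_def)
qed

lemma norm_iterated_backward_diff_le:
  fixes fs :: "nat \<Rightarrow> real \<Rightarrow> 'a::real_normed_vector"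
  assumes "\<And>k s. (fs k has_vector_derivative fs (Suc k) s) (at s)"
    and "\<And>\<sigma>. \<bar>\<sigma> - s0\<bar> \<le> real n * \<bar>h\<bar> \<Longrightarrow> norm (fs n \<sigma>) \<le> B"
  shows "norm ((backward_diff h 1 ^^ n) (fs 0) s0) \<le> \<bar>h\<bar> ^ n * B"
  using assms
proof (induction n arbitrary: fs B)
  case 0
  then show ?case by simp
next
  case (Suc n)
  define gs where "gs k = backward_diff h 1 (fs k)" for k
  have "norm ((backward_diff h 1 ^^ n) (gs 0) s0) \<le> \<bar>h\<bar> ^ n * (\<bar>h\<bar> * B)"
  proof (rule Suc.IH)
    show "(gs k has_vector_derivative gs (Suc k) s) (at s)" for k s
      unfolding gs_def by (rule has_vector_derivative_backward_diff) (rule Suc.prems(1))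
    show "norm (gs n \<sigma>) \<le> \<bar>h\<bar> * B" if "\<bar>\<sigma> - s0\<bar> \<le> real n * \<bar>h\<bar>" for \<sigma>
      unfolding gs_def
    proof (rule norm_backward_diff_le[OF Suc.prems(1)])
      show "norm (fs (Suc n) s) \<le> B" if "min (\<sigma> - h) \<sigma> \<le> s" "s \<le> max (\<sigma> - h) \<sigma>" for s
        using \<open>\<bar>\<sigma> - s0\<bar> \<le> real n * \<bar>h\<bar>\<close> that
        by (intro Suc.prems(2)) (auto simp: algebra_simps abs_if split: if_splits)
    qed
  qed
  moreover have "(backward_diff h 1 ^^ Suc n) (fs 0) = (backward_diff h 1 ^^ n) (gs 0)"
    by (simp only: gs_def funpow_Suc_right comp_def)
  ultimately show ?case by (simp add: mult_ac del: funpow.simps)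
qed

lemma iterated_backward_diff_along_line:
  "(backward_diff h e ^^ n) F (\<xi> + s *\<^sub>R e) = (backward_diff h 1 ^^ n) (\<lambda>s. F (\<xi> + s *\<^sub>R e)) s"
proof (induction n arbitrary: F s)
  case 0
  then show ?case by simp
next
  case (Suc n)
  have "backward_diff h 1 (\<lambda>s. F (\<xi> + s *\<^sub>R e)) = (\<lambda>s. backward_diff h e F (\<xi> + s *\<^sub>R e))"
    by (auto simp: backward_diff_def algebra_simps fun_eq_iff)
  then show ?case using Suc.IH[of "backward_diff h e F"] by (simp only: funpow_Suc_right comp_def)
qed

lemma integrable_lborel_translate:
  fixes F :: "'a::euclidean_space \<Rightarrow> complex"
  assumes "integrable lborel F"
  shows "integrable lborel (\<lambda>\<xi>. F (\<xi> + c))"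
proof -
  have "F \<in> borel_measurable borel" using borel_measurable_integrable[OF assms] by simp
  moreover have "integrable (distr lborel borel ((+) c)) F" using assms by (simp add: lborel_distr_plus)
  ultimately show ?thesis by (subst (asm) integrable_distr_eq) (auto simp: add.commute)
qed

lemma integral_lborel_translate:
  fixes F :: "'a::euclidean_space \<Rightarrow> complex"
  assumes "F \<in> borel_measurable borel"
  shows "(\<integral>\<xi>. F (\<xi> + c) \<partial>lborel) = (\<integral>\<xi>. F \<xi> \<partial>lborel)"
proof -
  have "(\<integral>\<xi>. F \<xi> \<partial>lborel) = (\<integral>\<xi>. F \<xi> \<partial>(distr lborel borel ((+) c)))" by (simp add: lborel_distr_plus)
  also have "\<dots> = (\<integral>\<xi>. F (c + \<xi>) \<partial>lborel)" by (rule integral_distr) (simp_all add: assms)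
  finally show ?thesis by (simp add: add.commute)
qed

lemma inv_fourier_integral_translate_half_period:
  fixes F :: "'a::euclidean_space \<Rightarrow> complex"
  assumes "integrable lborel F" "h * (e \<bullet> w) = pi"
  shows "inv_fourier_integral (\<lambda>\<xi>. F (\<xi> - h *\<^sub>R e)) w = - inv_fourier_integral F w"
proof -
  let ?g = "\<lambda>\<xi>. F \<xi> * iexp (\<xi> \<bullet> w)"
  have "?g \<in> borel_measurable borel"
    using borel_measurable_integrable[OF integrable_times_iexp[OF assms(1)]] by simp
  then have "inv_fourier_integral F w = (\<integral>\<xi>. ?g (\<xi> + (- h *\<^sub>R e)) \<partial>lborel)"
    unfolding inv_fourier_integral_def by (rule integral_lborel_translate[symmetric])
  also have "\<dots> = (\<integral>\<xi>. - (F (\<xi> - h *\<^sub>R e) * iexp (\<xi> \<bullet> w)) \<partial>lborel)"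
  proof (rule Bochner_Integration.integral_cong[OF refl])
    fix \<xi> :: 'a
    have "iexp ((\<xi> + - h *\<^sub>R e) \<bullet> w) = iexp (\<xi> \<bullet> w) * exp (- \<i> * complex_of_real (h * (e \<bullet> w)))"
      by (simp add: inner_add_left exp_add[symmetric] algebra_simps)
    also have "exp (- \<i> * complex_of_real (h * (e \<bullet> w))) = - 1"
      unfolding assms(2) by (simp add: exp_minus)
    finally show "?g (\<xi> + - h *\<^sub>R e) = - (F (\<xi> - h *\<^sub>R e) * iexp (\<xi> \<bullet> w))"
      by simp
  qed
  also have "\<dots> = - inv_fourier_integral (\<lambda>\<xi>. F (\<xi> - h *\<^sub>R e)) w"
    unfolding inv_fourier_integral_def by (rule Bochner_Integration.integral_minus)
  finally show ?thesis by simp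
qed

lemma integrable_iterated_backward_diff:
  fixes F :: "'a::euclidean_space \<Rightarrow> complex"
  assumes "integrable lborel F"
  shows "integrable lborel ((backward_diff h e ^^ n) F)"
proof (induction n)
  case (Suc n)
  then show ?case
    using integrable_lborel_translate[OF Suc, of "- h *\<^sub>R e"]
    by (simp add: backward_diff_def[abs_def])
qed (simp add: assms)

lemma inv_fourier_integral_iterated_backward_diff:
  fixes F :: "'a::euclidean_space \<Rightarrow> complex"
  assumes "integrable lborel F" "h * (e \<bullet> w) = pi"
  shows "inv_fourier_integral ((backward_diff h e ^^ n) F) w = 2 ^ n * inv_fourier_integral F w"
proof (induction n)
  case (Suc n)
  let ?F = "(backward_diff h e ^^ n) F"
  have F: "integrable lborel ?F"
    by (rule integrable_iterated_backward_diff[OF assms(1)])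
  have F': "integrable lborel (\<lambda>\<xi>. ?F (\<xi> - h *\<^sub>R e))"
    using integrable_lborel_translate[OF F, of "- h *\<^sub>R e"] by simp
  have "backward_diff h e ?F = (\<lambda>\<xi>. ?F \<xi> - ?F (\<xi> - h *\<^sub>R e))"
    by (rule ext) (simp only: backward_diff_def)
  then have "inv_fourier_integral (backward_diff h e ?F) w =
      inv_fourier_integral ?F w - inv_fourier_integral (\<lambda>\<xi>. ?F (\<xi> - h *\<^sub>R e)) w"
    unfolding inv_fourier_integral_def
    by (simp add: left_diff_distrib integrable_times_iexp[OF F] integrable_times_iexp[OF F'])
  also have "\<dots> = 2 * inv_fourier_integral ?F w"
    using inv_fourier_integral_translate_half_period[OF F assms(2)] by simp
  finally show ?case using Suc by simp
qed simp

lemma exp_neg_norm_add_square_le: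
  fixes \<xi> v :: "'a::real_normed_vector"
  assumes "c \<ge> 0" "norm v \<le> R"
  shows "exp (- c * norm (\<xi> + v) ^ 2) \<le> exp (c * R^2) * exp (- (c/2) * norm \<xi> ^ 2)"
proof -
  have "norm \<xi> ^ 2 \<le> (norm (\<xi> + v) + norm v) ^ 2"
    using norm_triangle_ineq4[of "\<xi> + v" v] by (simp add: power_mono)
  also have "\<dots> \<le> 2 * norm (\<xi> + v) ^ 2 + 2 * norm v ^ 2"
    using sum_squares_ge_zero[of "norm (\<xi> + v) - norm v" 0] by (simp add: power2_eq_square algebra_simps)
  also have "\<dots> \<le> 2 * norm (\<xi> + v) ^ 2 + 2 * R ^ 2"
    using assms(2) by (simp add: power_mono)
  finally have "(c/2) * norm \<xi> ^ 2 \<le> (c/2) * (2 * norm (\<xi> + v) ^ 2 + 2 * R ^ 2)"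
    using assms(1) by (intro mult_left_mono) auto
  then show ?thesis by (simp flip: exp_add add: algebra_simps)
qed

lemma norm_polynomial_times_damped_exp_le:
  fixes \<xi> v :: "'a::euclidean_space"
  assumes C: "0 \<le> C" "\<And>z. cmod (P z) \<le> C * (1 + norm z ^ 2) ^ k"
    and M: "\<And>s. s \<ge> 0 \<Longrightarrow> (1 + s) ^ k * exp (- (l^2/4) * s) \<le> M"
    and "\<And>\<xi>. Re (a \<xi>) \<ge> 0" and t: "0 \<le> t" "t \<le> T" and "norm v \<le> R"
  shows "cmod (P (t, \<xi> + v) * exp (damped_exponent a l (t, \<xi> + v))) \<le>
     (C * (1 + T^2) ^ k * M * exp (l^2 * R^2 / 4)) * exp (- (l^2 * norm \<xi> ^ 2) / 8)"
proof -
  define s where "s = norm (\<xi> + v) ^ 2"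
  have "0 \<le> s" by (simp add: s_def)
  have "0 \<le> M" using M[of 0] by (smt (verit) exp_gt_zero mult_nonneg_nonneg zero_le_power)
  have p1: "cmod (P (t, \<xi> + v)) \<le> C * (1 + T^2) ^ k * (1 + s) ^ k"
  proof -
    have "t^2 \<le> T^2" using t by (simp add: power_mono)
    then have "1 + t^2 + s \<le> (1 + T^2) * (1 + s)" using \<open>0 \<le> s\<close>
      by (simp add: algebra_simps) (smt (verit) mult_nonneg_nonneg zero_le_power2)
    then have "(1 + norm (t, \<xi> + v) ^ 2) ^ k \<le> ((1 + T^2) * (1 + s)) ^ k"
      by (intro power_mono) (auto simp: norm_Pair s_def)
    then show ?thesis using C(2)[of "(t, \<xi> + v)"] C(1)
      by (simp add: power_mult_distrib) (smt (verit) mult_left_mono mult.assoc)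
  qed
  have p2: "cmod (exp (damped_exponent a l (t, \<xi> + v))) \<le> exp (- (l^2/2) * s)"
    using Re_damped_exponent_le[OF assms(4) t(1), where l=l and \<xi>="\<xi> + v"] by (simp add: s_def)
  have p3: "(1 + s) ^ k * exp (- (l^2/2) * s) \<le> M * exp (- (l^2/4) * s)"
  proof -
    have "(1 + s) ^ k * exp (- (l^2/2) * s) = ((1 + s) ^ k * exp (- (l^2/4) * s)) * exp (- (l^2/4) * s)"
      by (simp add: mult.assoc exp_add[symmetric])
    also have "\<dots> \<le> M * exp (- (l^2/4) * s)" by (intro mult_right_mono M \<open>0 \<le> s\<close>) simp
    finally show ?thesis .
  qed
  have p4: "exp (- (l^2/4) * s) \<le> exp (l^2 * R^2 / 4) * exp (- (l^2 * norm \<xi> ^ 2) / 8)"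
    using exp_neg_norm_add_square_le[of "l^2/4" v R \<xi>] assms(7) by (simp add: s_def)
  have "cmod (P (t, \<xi> + v) * exp (damped_exponent a l (t, \<xi> + v))) \<le>
      (C * (1 + T^2) ^ k * (1 + s) ^ k) * exp (- (l^2/2) * s)"
    unfolding norm_mult by (intro mult_mono p1 p2) (use C(1) \<open>0 \<le> s\<close> in auto)
  also have "\<dots> = C * (1 + T^2) ^ k * ((1 + s) ^ k * exp (- (l^2/2) * s))" by simp
  also have "\<dots> \<le> C * (1 + T^2) ^ k * (M * (exp (l^2 * R^2 / 4) * exp (- (l^2 * norm \<xi> ^ 2) / 8)))"
    by (intro mult_left_mono order.trans[OF p3] mult_left_mono[OF p4 \<open>0 \<le> M\<close>]) (use C(1) in auto)
  finally show ?thesis by (simp add: mult_ac)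
qed

lemma norm_iterated_backward_diff_damped_multiplier_le:
  fixes a :: "'a::euclidean_space \<Rightarrow> complex" and e :: 'a
  assumes a: "complex_polynomial_function a" "\<And>\<xi>. Re (a \<xi>) \<ge> 0" and "l > 0" "norm e = 1"
  obtains B where "\<And>t h \<xi>. 0 \<le> t \<Longrightarrow> t \<le> T \<Longrightarrow> \<bar>h\<bar> \<le> pi \<Longrightarrow>
    cmod ((backward_diff h e ^^ N) (damped_multiplier a l t) \<xi>) \<le> \<bar>h\<bar> ^ N * B * exp (- (l^2 * norm \<xi> ^ 2) / 8)"
proof -
  obtain Ps where Ps0: "Ps 0 = (\<lambda>_. 1)" and Ps: "\<And>k. complex_polynomial_function (Ps k)"
    and Ps_deriv: "\<And>k z s. ((\<lambda>s. Ps k (z + s *\<^sub>R (0, e)) * exp (damped_exponent a l (z + s *\<^sub>R (0, e))))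
      has_vector_derivative Ps (Suc k) (z + s *\<^sub>R (0, e)) * exp (damped_exponent a l (z + s *\<^sub>R (0, e)))) (at s)"
    using polynomial_times_exp_iterated_line_derivatives[OF complex_polynomial_function_damped_exponent[OF a(1)],
        where v = "(0::real, e)"] by blast
  obtain C k where C: "0 \<le> C" "\<And>z. cmod (Ps N z) \<le> C * (1 + norm z ^ 2) ^ k"
    using complex_polynomial_function_growth[OF Ps[of N]] by blast
  obtain M where M: "\<And>s. s \<ge> 0 \<Longrightarrow> (1 + s) ^ k * exp (- (l^2/4) * s) \<le> M"
    using power_times_exp_bounded[of "l^2/4" k] \<open>l > 0\<close> by auto
  show ?thesis
  proof (rule that[of "C * (1 + T^2) ^ k * M * exp (l^2 * (real N * pi)^2 / 4)"])
    fix t h \<xi> assume t: "0 \<le> t" "t \<le> T" and h: "\<bar>h\<bar> \<le> pi"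
    define fs where "fs j s = Ps j (t, \<xi> + s *\<^sub>R e) * exp (damped_exponent a l (t, \<xi> + s *\<^sub>R e))" for j s
    have "(fs j has_vector_derivative fs (Suc j) s) (at s)" for j s
      using Ps_deriv[of j "(t, \<xi>)" s] by (simp add: fs_def[abs_def])
    moreover have "cmod (fs N \<sigma>) \<le> C * (1 + T^2) ^ k * M * exp (l^2 * (real N * pi)^2 / 4) *
        exp (- (l^2 * norm \<xi> ^ 2) / 8)" if "\<bar>\<sigma> - 0\<bar> \<le> real N * \<bar>h\<bar>" for \<sigma>
      unfolding fs_def
    proof (rule norm_polynomial_times_damped_exp_le[OF C M a(2) t])
      show "norm (\<sigma> *\<^sub>R e) \<le> real N * pi"
        using that h \<open>norm e = 1\<close> by (simp add: order_trans[OF _ mult_left_mono])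
    qed
    ultimately have "cmod ((backward_diff h 1 ^^ N) (fs 0) 0) \<le>
        \<bar>h\<bar> ^ N * (C * (1 + T^2) ^ k * M * exp (l^2 * (real N * pi)^2 / 4) * exp (- (l^2 * norm \<xi> ^ 2) / 8))"
      by (rule norm_iterated_backward_diff_le)
    moreover have "fs 0 = (\<lambda>s. damped_multiplier a l t (\<xi> + s *\<^sub>R e))"
      by (simp add: fs_def[abs_def] Ps0 damped_multiplier_eq_exp)
    ultimately show "cmod ((backward_diff h e ^^ N) (damped_multiplier a l t) \<xi>) \<le>
        \<bar>h\<bar> ^ N * (C * (1 + T^2) ^ k * M * exp (l^2 * (real N * pi)^2 / 4)) * exp (- (l^2 * norm \<xi> ^ 2) / 8)"
      using iterated_backward_diff_along_line[where h=h and e=e and n=N and F="damped_multiplier a l t"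
          and \<xi>=\<xi> and s=0]
      by (simp add: mult_ac)
  qed
qed

text \<open>For h (e \<bullet> w) = pi, translating the frequency by h e flips the sign of iexp (xi \<bullet> w).
  Hence N backward differences of step h along e multiply the kernel by 2^N, while by the mean
  value theorem they cost only a factor |h|^N = (pi / |w \<bullet> e|)^N; this replaces integration by
  parts.\<close>

lemma damped_kernel_decay:
  fixes a :: "'a::euclidean_space \<Rightarrow> complex" and e :: 'a
  assumes a: "complex_polynomial_function a" "\<And>\<xi>. Re (a \<xi>) \<ge> 0" and l: "l > 0" and e: "norm e = 1"
  obtains K where "\<And>t w. 0 \<le> t \<Longrightarrow> t \<le> T \<Longrightarrow> 1 \<le> \<bar>w \<bullet> e\<bar> \<Longrightarrow>
    cmod (damped_kernel a l t w) \<le> K / \<bar>w \<bullet> e\<bar> ^ N"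
proof -
  obtain B where B: "\<And>t h \<xi>. 0 \<le> t \<Longrightarrow> t \<le> T \<Longrightarrow> \<bar>h\<bar> \<le> pi \<Longrightarrow>
    cmod ((backward_diff h e ^^ N) (damped_multiplier a l t) \<xi>) \<le> \<bar>h\<bar> ^ N * B * exp (- (l^2 * norm \<xi> ^ 2) / 8)"
    using norm_iterated_backward_diff_damped_multiplier_le[OF a l e] by blast
  have gaussian: "exp (- (l^2 * norm \<xi> ^ 2) / 8) = cmod (gaussian (2 / l) 0 \<xi>)" for \<xi> :: 'a
    using l by (simp add: norm_gaussian power_divide field_simps)
  define \<Gamma> where "\<Gamma> = (\<integral>\<xi>. exp (- (l^2 * norm \<xi> ^ 2) / 8) \<partial>(lborel :: 'a measure))"
  show ?thesis
  proof (rule that[of "(pi / 2) ^ N * B * \<Gamma>"])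
    fix t and w :: 'a
    assume t: "0 \<le> t" "t \<le> T" and we: "1 \<le> \<bar>w \<bullet> e\<bar>"
    define h where "h = pi / (w \<bullet> e)"
    have hw: "h * (e \<bullet> w) = pi" using we by (simp add: h_def inner_commute)
    have habs: "\<bar>h\<bar> = pi / \<bar>w \<bullet> e\<bar>" by (simp add: h_def abs_divide)
    then have "\<bar>h\<bar> \<le> pi" using we by (simp add: divide_le_eq)
    let ?D = "(backward_diff h e ^^ N) (damped_multiplier a l t)"
    have G: "integrable lborel (damped_multiplier a l t)"
      by (rule integrable_damped_multiplier[OF a t(1) l])
    have "cmod (inv_fourier_integral ?D w) \<le>
        (\<integral>\<xi>. \<bar>h\<bar> ^ N * B * exp (- (l^2 * norm \<xi> ^ 2) / 8) \<partial>(lborel :: 'a measure))"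
      unfolding inv_fourier_integral_def
    proof (rule Bochner_Integration.integral_norm_bound_integral)
      show "integrable lborel (\<lambda>\<xi>. ?D \<xi> * iexp (\<xi> \<bullet> w))"
        by (intro integrable_times_iexp integrable_iterated_backward_diff G)
      show "integrable lborel (\<lambda>\<xi>::'a. \<bar>h\<bar> ^ N * B * exp (- (l^2 * norm \<xi> ^ 2) / 8))"
        unfolding gaussian by (intro integrable_mult_right integrable_norm integrable_gaussian) (use l in simp)
      show "norm (?D \<xi> * iexp (\<xi> \<bullet> w)) \<le> \<bar>h\<bar> ^ N * B * exp (- (l^2 * norm \<xi> ^ 2) / 8)" for \<xi>
        using B[OF t \<open>\<bar>h\<bar> \<le> pi\<close>] by (simp add: norm_mult)
    qed
    also have "\<dots> = \<bar>h\<bar> ^ N * B * \<Gamma>" unfolding \<Gamma>_def by simp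
    finally have "cmod (damped_kernel a l t w) \<le> \<bar>h\<bar> ^ N * B * \<Gamma> / 2 ^ N"
      using inv_fourier_integral_iterated_backward_diff[OF G hw, of N]
      by (simp add: damped_kernel_def norm_mult norm_power field_simps)
    also have "\<dots> = (pi / 2) ^ N * B * \<Gamma> / \<bar>w \<bullet> e\<bar> ^ N"
      unfolding habs by (simp add: power_divide field_simps)
    finally show "cmod (damped_kernel a l t w) \<le> (pi / 2) ^ N * B * \<Gamma> / \<bar>w \<bullet> e\<bar> ^ N" .
  qed
qed

definition tail_weight :: "real \<Rightarrow> real" where
  "tail_weight s = (if \<bar>s\<bar> \<le> 1 then 1 else 1 / s^2)"

lemma tail_weight_pos: "0 < tail_weight s"
  unfolding tail_weight_def by (cases "\<bar>s\<bar> \<le> 1") auto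

lemma tail_weight_le_one: "tail_weight s \<le> 1"
  using one_le_power[of "\<bar>s\<bar>" 2] by (auto simp: tail_weight_def)

lemma borel_measurable_tail_weight[measurable]: "tail_weight \<in> borel_measurable borel"
  unfolding tail_weight_def by measurable

lemma Basis_max_coordinate:
  fixes w :: "'a::euclidean_space"
  obtains b0 where "b0 \<in> Basis" "\<And>b. b \<in> Basis \<Longrightarrow> \<bar>w \<bullet> b\<bar> \<le> \<bar>w \<bullet> b0\<bar>"
proof -
  have "Max ((\<lambda>b. \<bar>w \<bullet> b\<bar>) ` Basis) \<in> (\<lambda>b. \<bar>w \<bullet> b\<bar>) ` (Basis::'a set)"
    by (rule Max_in) auto
  then obtain b0 where b0: "b0 \<in> Basis" "Max ((\<lambda>b. \<bar>w \<bullet> b\<bar>) ` Basis) = \<bar>w \<bullet> b0\<bar>"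
    by (rule imageE) simp
  show ?thesis
  proof (rule that[OF b0(1)])
    show "\<bar>w \<bullet> b\<bar> \<le> \<bar>w \<bullet> b0\<bar>" if "b \<in> Basis" for b
      unfolding b0(2)[symmetric] using that by simp
  qed
qed

lemma prod_tail_weight_ge:
  fixes w :: "'a::euclidean_space"
  assumes "b0 \<in> Basis" "1 < \<bar>w \<bullet> b0\<bar>" "\<And>b. b \<in> Basis \<Longrightarrow> \<bar>w \<bullet> b\<bar> \<le> \<bar>w \<bullet> b0\<bar>"
  shows "1 / \<bar>w \<bullet> b0\<bar> ^ (2 * DIM('a)) \<le> (\<Prod>b\<in>Basis. tail_weight (w \<bullet> b))"
proof -
  have "1 / (w \<bullet> b0)^2 \<le> tail_weight (w \<bullet> b)" if "b \<in> Basis" for b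
  proof (cases "\<bar>w \<bullet> b\<bar> \<le> 1")
    case True
    then show ?thesis using assms(2) by (simp add: tail_weight_def divide_le_eq one_less_power abs_less_iff)
      (metis abs_power2 one_less_power power2_abs pos2 less_imp_le)
  next
    case False
    have "(w \<bullet> b)^2 \<le> (w \<bullet> b0)^2" using assms(3)[OF that] by (metis abs_ge_zero power2_abs power_mono)
    then show ?thesis using False by (simp add: tail_weight_def frac_le)
  qed
  then have "(1 / (w \<bullet> b0)^2) ^ DIM('a) \<le> (\<Prod>b\<in>Basis. tail_weight (w \<bullet> b))"
    using prod_mono[of "Basis::'a set" "\<lambda>_. 1 / (w \<bullet> b0)^2" "\<lambda>b. tail_weight (w \<bullet> b)"]
    by (simp add: prod_constant)
  then show ?thesis by (simp add: power_mult power_one_over power2_abs)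
qed

lemma damped_kernel_tail_weight_bound:
  fixes a :: "'a::euclidean_space \<Rightarrow> complex"
  assumes a: "complex_polynomial_function a" "\<And>\<xi>. Re (a \<xi>) \<ge> 0" and l: "l > 0"
  obtains K where "K \<ge> 0"
    "\<And>t w. 0 \<le> t \<Longrightarrow> t \<le> T \<Longrightarrow> cmod (damped_kernel a l t w) \<le> K * (\<Prod>b\<in>Basis. tail_weight (w \<bullet> b))"
proof -
  let ?N = "2 * DIM('a)"
  have "\<forall>b\<in>(Basis::'a set). \<exists>K. \<forall>t w. 0 \<le> t \<longrightarrow> t \<le> T \<longrightarrow> 1 \<le> \<bar>w \<bullet> b\<bar> \<longrightarrow>
      cmod (damped_kernel a l t w) \<le> K / \<bar>w \<bullet> b\<bar> ^ ?N"
    using damped_kernel_decay[OF a l, where T=T and N="?N"] by (metis norm_Basis)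
  then obtain Kb where Kb: "\<And>b t w. b \<in> Basis \<Longrightarrow> 0 \<le> t \<Longrightarrow> t \<le> T \<Longrightarrow> 1 \<le> \<bar>w \<bullet> b\<bar> \<Longrightarrow>
      cmod (damped_kernel a l t w) \<le> Kb b / \<bar>w \<bullet> b\<bar> ^ ?N"
    by metis
  define K0 where "K0 = (\<integral>\<xi>. cmod (gaussian (1 / l) (0::'a) \<xi>) \<partial>lborel)"
  define K where "K = K0 + (\<Sum>b\<in>(Basis::'a set). \<bar>Kb b\<bar>)"
  have "K0 \<ge> 0" unfolding K0_def by simp
  then have "K0 \<le> K" by (simp add: K_def sum_nonneg)
  have Kb_le: "\<bar>Kb b\<bar> \<le> K" if "b \<in> Basis" for b
    using member_le_sum[of b Basis "\<lambda>b. \<bar>Kb b\<bar>"] that \<open>K0 \<ge> 0\<close> by (auto simp: K_def)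
  show ?thesis
  proof (rule that)
    show "K \<ge> 0" using \<open>K0 \<ge> 0\<close> by (simp add: K_def sum_nonneg)
    fix t and w :: 'a
    assume t: "0 \<le> t" "t \<le> T"
    show "cmod (damped_kernel a l t w) \<le> K * (\<Prod>b\<in>Basis. tail_weight (w \<bullet> b))"
    proof (cases "\<forall>b\<in>(Basis::'a set). \<bar>w \<bullet> b\<bar> \<le> 1")
      case True
      then have "(\<Prod>b\<in>Basis. tail_weight (w \<bullet> b)) = 1" by (simp add: tail_weight_def)
      then show ?thesis
        using norm_damped_kernel_le[OF a t(1) l, of w] \<open>K0 \<le> K\<close> by (simp add: K0_def)
    next
      case False
      obtain b0 where b0: "b0 \<in> Basis" and le: "\<And>b. b \<in> Basis \<Longrightarrow> \<bar>w \<bullet> b\<bar> \<le> \<bar>w \<bullet> b0\<bar>"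
        using Basis_max_coordinate[of w] by blast
      then have gt: "1 < \<bar>w \<bullet> b0\<bar>" using False by force
      have "cmod (damped_kernel a l t w) \<le> \<bar>Kb b0\<bar> * (1 / \<bar>w \<bullet> b0\<bar> ^ ?N)"
        using Kb[OF b0(1) t, of w] gt divide_right_mono[OF abs_ge_self, of "\<bar>w \<bullet> b0\<bar> ^ ?N" "Kb b0"]
        by simp
      also have "\<dots> \<le> K * (\<Prod>b\<in>Basis. tail_weight (w \<bullet> b))"
        using Kb_le[OF b0(1)] prod_tail_weight_ge[OF b0(1) gt le] \<open>K0 \<ge> 0\<close>
        by (intro mult_mono) (auto simp: K_def sum_nonneg)
      finally show ?thesis .
    qed
  qed
qed

section \<open>The damped kernel does not vanish at the origin\<close>

lemma complex_polynomial_function_hom_symbol: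
  "complex_polynomial_function (hom_symbol m c :: real^'n \<Rightarrow> complex)"
proof (cases "finite {\<alpha>::'n \<Rightarrow> nat. (\<Sum>i\<in>UNIV. \<alpha> i) = m}")
  case True
  have "complex_polynomial_function (\<lambda>\<xi>::real^'n. \<Sum>\<alpha>\<in>{\<alpha>::'n \<Rightarrow> nat. (\<Sum>i\<in>UNIV. \<alpha> i) = m}.
      c \<alpha> * \<i> ^ m * (\<Prod>i\<in>UNIV. complex_of_real (\<xi> \<bullet> axis i 1) ^ \<alpha> i))"
    by (intro complex_polynomial_function_sum True complex_polynomial_function.intros
        complex_polynomial_function_prod complex_polynomial_function_power) auto
  then show ?thesis by (simp add: hom_symbol_def[abs_def] inner_axis)
next
  case False
  then show ?thesis by (simp add: hom_symbol_def[abs_def] complex_polynomial_function.const)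
qed

lemma hom_symbol_scaleR:
  fixes \<xi> :: "real^'n"
  shows "hom_symbol m c (s *\<^sub>R \<xi>) = complex_of_real (s ^ m) * hom_symbol m c \<xi>"
proof -
  have "(\<Prod>i\<in>UNIV. complex_of_real ((s *\<^sub>R \<xi>) $ i) ^ \<alpha> i) =
      complex_of_real s ^ (\<Sum>i\<in>UNIV. \<alpha> i) * (\<Prod>i\<in>UNIV. complex_of_real (\<xi> $ i) ^ \<alpha> i)" for \<alpha> :: "'n \<Rightarrow> nat"
    by (simp add: power_mult_distrib prod.distrib power_sum)
  then show ?thesis
    unfolding hom_symbol_def sum_distrib_left by (intro sum.cong) (auto simp: mult_ac)
qed

lemma strongly_elliptic_Re_nonneg:
  assumes "strongly_elliptic m c"
  shows "Re (hom_symbol m c \<xi>) \<ge> 0"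
proof -
  obtain k where "k > 0" "Re (hom_symbol m c \<xi>) \<ge> k * norm \<xi> ^ m"
    using assms unfolding strongly_elliptic_def by blast
  moreover have "0 \<le> k * norm \<xi> ^ m" using \<open>k > 0\<close> by simp
  ultimately show ?thesis by linarith
qed

lemma lborel_integral_scaleR:
  fixes f :: "'a::euclidean_space \<Rightarrow> complex"
  assumes f[measurable]: "f \<in> borel_measurable borel" and c: "c \<noteq> 0"
  shows "(\<integral>x. f x \<partial>lborel) = complex_of_real (\<bar>c\<bar> ^ DIM('a)) * (\<integral>x. f (c *\<^sub>R x) \<partial>lborel)"
proof -
  have "(\<integral>x. f x \<partial>lborel) = (\<integral>x. f x \<partial>density (distr lborel borel (\<lambda>x. 0 + c *\<^sub>R x)) (\<lambda>_. \<bar>c\<bar> ^ DIM('a)))"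
    using lborel_affine[OF c, of "0::'a"] by simp
  also have "\<dots> = (\<integral>x. \<bar>c\<bar> ^ DIM('a) *\<^sub>R f x \<partial>distr lborel borel (\<lambda>x. 0 + c *\<^sub>R x))"
    by (subst integral_density) auto
  also have "\<dots> = (\<integral>x. \<bar>c\<bar> ^ DIM('a) *\<^sub>R f (0 + c *\<^sub>R x) \<partial>lborel)"
    by (subst integral_distr) auto
  finally show ?thesis by (simp add: scaleR_conv_of_real)
qed

lemma damped_kernel_zero_rescaled:
  fixes a :: "'a::euclidean_space \<Rightarrow> complex"
  assumes "continuous_on UNIV a" "\<And>s \<xi>. a (s *\<^sub>R \<xi>) = complex_of_real (s ^ m) * a \<xi>" "l > 0"
  shows "damped_kernel a l t 0 = complex_of_real (1 / l ^ DIM('a)) *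
    (\<integral>\<eta>. exp (- complex_of_real (t / l ^ m) * a \<eta>) * gaussian 1 0 \<eta> \<partial>lborel)"
proof -
  have "damped_multiplier a l t \<in> borel_measurable borel"
    unfolding damped_multiplier_def
    by (intro borel_measurable_continuous_onI continuous_intros continuous_on_compose2[OF assms(1)]) auto
  then have "damped_kernel a l t 0 = complex_of_real (\<bar>1 / l\<bar> ^ DIM('a)) *
      (\<integral>\<eta>. damped_multiplier a l t ((1 / l) *\<^sub>R \<eta>) \<partial>lborel)"
    unfolding damped_kernel_def inv_fourier_integral_def using assms(3)
    by (subst lborel_integral_scaleR[of _ "1 / l"]) simp_all
  also have "(\<lambda>\<eta>. damped_multiplier a l t ((1 / l) *\<^sub>R \<eta>)) =
      (\<lambda>\<eta>. exp (- complex_of_real (t / l ^ m) * a \<eta>) * gaussian 1 0 \<eta>)"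
  proof
    fix \<eta> :: 'a
    have "l^2 * norm ((1 / l) *\<^sub>R \<eta>) ^ 2 = norm \<eta> ^ 2"
      using assms(3) by (simp add: power_mult_distrib power_divide)
    moreover have "- complex_of_real t * (complex_of_real ((1 / l) ^ m) * a \<eta>) =
        - complex_of_real (t / l ^ m) * a \<eta>"
      by (simp add: power_divide)
    ultimately show "damped_multiplier a l t ((1 / l) *\<^sub>R \<eta>) =
        exp (- complex_of_real (t / l ^ m) * a \<eta>) * gaussian 1 0 \<eta>"
      by (simp add: damped_multiplier_def gaussian_def assms(2) flip: exp_of_real)
  qed
  finally show ?thesis using assms(3) by (simp add: field_simps)
qed

lemma tendsto_integral_damped_gaussian:
  fixes a :: "'a::euclidean_space \<Rightarrow> complex"
  assumes "continuous_on UNIV a" "\<And>\<xi>. Re (a \<xi>) \<ge> 0" "t \<ge> 0" "\<And>n. s n \<ge> 0" "s \<longlonglongrightarrow> 0"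
  shows "(\<lambda>n. \<integral>\<eta>. exp (- complex_of_real (t * s n) * a \<eta>) * gaussian 1 0 \<eta> \<partial>lborel) \<longlonglongrightarrow>
    (\<integral>\<eta>. gaussian 1 0 \<eta> \<partial>(lborel :: 'a measure))"
proof (rule integral_dominated_convergence[where w="\<lambda>\<eta>. cmod (gaussian 1 0 \<eta>)"])
  have "continuous_on UNIV (\<lambda>\<eta>. exp (- complex_of_real (t * s n) * a \<eta>) * gaussian 1 0 \<eta>)" for n
    by (intro continuous_intros continuous_on_compose2[OF assms(1)] continuous_on_gaussian) auto
  then have "(\<lambda>\<eta>. exp (- complex_of_real (t * s n) * a \<eta>) * gaussian 1 0 \<eta>) \<in> borel_measurable borel" for n
    by (rule borel_measurable_continuous_onI)
  then show "(\<lambda>\<eta>. exp (- complex_of_real (t * s n) * a \<eta>) * gaussian 1 0 \<eta>) \<in> borel_measurable lborel" for n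
    by simp
  show "integrable lborel (\<lambda>\<eta>::'a. cmod (gaussian 1 0 \<eta>))"
    by (intro integrable_norm integrable_gaussian) simp
  show "AE \<eta> in lborel. (\<lambda>n. exp (- complex_of_real (t * s n) * a \<eta>) * gaussian 1 0 \<eta>) \<longlonglongrightarrow> gaussian 1 0 \<eta>"
  proof (intro AE_I2)
    fix \<eta> :: 'a
    have "(\<lambda>n. exp (- complex_of_real (t * s n) * a \<eta>) * gaussian 1 0 \<eta>) \<longlonglongrightarrow>
        exp (- complex_of_real (t * 0) * a \<eta>) * gaussian 1 0 \<eta>"
      by (intro tendsto_intros assms(5))
    then show "(\<lambda>n. exp (- complex_of_real (t * s n) * a \<eta>) * gaussian 1 0 \<eta>) \<longlonglongrightarrow> gaussian 1 0 \<eta>"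
      by simp
  qed
  show "AE \<eta> in lborel. norm (exp (- complex_of_real (t * s n) * a \<eta>) * gaussian 1 0 \<eta>) \<le> cmod (gaussian 1 0 \<eta>)" for n
  proof (intro AE_I2)
    fix \<eta> :: 'a
    have "Re (complex_of_real (t * s n) * a \<eta>) \<ge> 0" using assms(2)[of \<eta>] assms(3,4) by simp
    then show "norm (exp (- complex_of_real (t * s n) * a \<eta>) * gaussian 1 0 \<eta>) \<le> cmod (gaussian 1 0 \<eta>)"
      by (simp add: norm_mult mult_left_le_one_le)
  qed
qed simp

lemma damped_kernel_zero_nonzero:
  fixes a :: "'a::euclidean_space \<Rightarrow> complex"
  assumes "continuous_on UNIV a" "\<And>s \<xi>. a (s *\<^sub>R \<xi>) = complex_of_real (s ^ m) * a \<xi>"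
    "\<And>\<xi>. Re (a \<xi>) \<ge> 0" "m > 0" "t \<ge> 0"
  obtains l where "l > 0" "damped_kernel a l t 0 \<noteq> 0"
proof -
  define s where "s n = 1 / real (Suc n) ^ m" for n
  have "(\<lambda>n. inverse (real (Suc n)) ^ m) \<longlonglongrightarrow> 0 ^ m"
    by (intro tendsto_intros LIMSEQ_inverse_real_of_nat)
  then have s: "s \<longlonglongrightarrow> 0"
    using assms(4) by (simp add: s_def[abs_def] power_one_over inverse_eq_divide zero_power)
  have lim: "(\<lambda>n. \<integral>\<eta>. exp (- complex_of_real (t * s n) * a \<eta>) * gaussian 1 0 \<eta> \<partial>lborel)
      \<longlonglongrightarrow> (\<integral>\<eta>. gaussian 1 0 \<eta> \<partial>(lborel :: 'a measure))"
    by (rule tendsto_integral_damped_gaussian[OF assms(1,3,5) _ s]) (simp add: s_def)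
  have "(\<integral>\<eta>. gaussian 1 0 \<eta> \<partial>(lborel :: 'a measure)) \<noteq> 0"
    using gaussian_fourier_integral(2)[of 1 0 "0::'a"] by simp
  then have "eventually (\<lambda>n. (\<integral>\<eta>. exp (- complex_of_real (t * s n) * a \<eta>) * gaussian 1 0 \<eta> \<partial>lborel) \<noteq> 0)
      sequentially"
    by (rule tendsto_imp_eventually_ne[OF lim])
  then obtain n where "(\<integral>\<eta>. exp (- complex_of_real (t * s n) * a \<eta>) * gaussian 1 0 \<eta> \<partial>lborel) \<noteq> 0"
    by (auto dest: eventually_happens)
  moreover have "t * s n = t / real (Suc n) ^ m" by (simp add: s_def)
  moreover have "complex_of_real (1 / real (Suc n) ^ DIM('a)) \<noteq> 0"
    by (simp only: of_real_eq_0_iff) simp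
  ultimately have "damped_kernel a (real (Suc n)) t 0 \<noteq> 0"
    by (simp only: damped_kernel_zero_rescaled[OF assms(1,2), of "real (Suc n)" t] mult_eq_0_iff) simp
  then show ?thesis by (intro that[of "real (Suc n)"]) auto
qed

section \<open>Integrals of the tail weight\<close>

lemma nn_integral_inverse_square_tail:
  assumes "r > 0"
  shows "(\<integral>\<^sup>+s. ennreal (1 / s ^ 2) * indicator {r..} s \<partial>lborel) = ennreal (1 / r)"
proof -
  have "((\<lambda>x. 1 / x ^ 2) has_integral 1 / (real (2 - 1) * r ^ (2 - 1))) {r..}"
    by (rule has_integral_inverse_power_to_inf) (use assms in auto)
  then show ?thesis by (intro nn_integral_has_integral_lebesgue') simp_all
qed

lemma nn_integral_inverse_square_tail_neg:
  assumes "r > 0"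
  shows "(\<integral>\<^sup>+s. ennreal (1 / s ^ 2) * indicator {..-r} s \<partial>lborel) = ennreal (1 / r)"
proof -
  have "(\<integral>\<^sup>+s. ennreal (1 / s ^ 2) * indicator {..-r} s \<partial>lborel) =
      ennreal \<bar>- 1\<bar> * (\<integral>\<^sup>+s. ennreal (1 / (0 + - 1 * s) ^ 2) * indicator {..-r} (0 + - 1 * s) \<partial>lborel)"
    by (rule nn_integral_real_affine) auto
  also have "(\<integral>\<^sup>+s. ennreal (1 / (0 + - 1 * s) ^ 2) * indicator {..-r} (0 + - 1 * s) \<partial>lborel) =
      (\<integral>\<^sup>+s. ennreal (1 / s ^ 2) * indicator {r..} s \<partial>lborel)"
    by (intro nn_integral_cong) (auto simp: indicator_def)
  finally show ?thesis using nn_integral_inverse_square_tail[OF assms] by simp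
qed

lemma nn_integral_tail_weight_tail:
  assumes "r \<ge> 1"
  shows "(\<integral>\<^sup>+s. ennreal (tail_weight s) * indicator {s. r \<le> \<bar>s\<bar>} s \<partial>lborel) \<le> ennreal (2 / r)"
proof -
  have "ennreal (tail_weight s) * indicator {s. r \<le> \<bar>s\<bar>} s \<le>
      ennreal (1 / s ^ 2) * indicator {r..} s + ennreal (1 / s ^ 2) * indicator {..-r} s" for s
  proof (cases "r \<le> \<bar>s\<bar>")
    case True
    have "tail_weight s \<le> 1 / s^2"
    proof (cases "\<bar>s\<bar> \<le> 1")
      case True
      then have "\<bar>s\<bar> = 1" using \<open>r \<le> \<bar>s\<bar>\<close> assms by simp
      then have "s^2 = 1" by (metis abs_power2 one_power2 power2_abs)
      then show ?thesis by (simp add: tail_weight_def)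
    qed (simp add: tail_weight_def)
    then show ?thesis using True assms by (auto simp: indicator_def abs_if ennreal_leI split: if_splits)
  qed (simp add: indicator_def)
  then have "(\<integral>\<^sup>+s. ennreal (tail_weight s) * indicator {s. r \<le> \<bar>s\<bar>} s \<partial>lborel) \<le>
      (\<integral>\<^sup>+s. ennreal (1 / s ^ 2) * indicator {r..} s + ennreal (1 / s ^ 2) * indicator {..-r} s \<partial>lborel)"
    by (intro nn_integral_mono)
  also have "\<dots> = (\<integral>\<^sup>+s. ennreal (1 / s ^ 2) * indicator {r..} s \<partial>lborel) +
      (\<integral>\<^sup>+s. ennreal (1 / s ^ 2) * indicator {..-r} s \<partial>lborel)"
    by (rule nn_integral_add) auto
  also have "\<dots> = ennreal (2 / r)"
    using nn_integral_inverse_square_tail nn_integral_inverse_square_tail_neg assms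
    by (simp flip: ennreal_plus)
  finally show ?thesis .
qed

lemma nn_integral_tail_weight_le: "(\<integral>\<^sup>+s. ennreal (tail_weight s) \<partial>lborel) \<le> 4"
proof -
  have "(\<integral>\<^sup>+s. ennreal (tail_weight s) \<partial>lborel) \<le>
      (\<integral>\<^sup>+s. indicator {-1..1} s + ennreal (tail_weight s) * indicator {s. 1 \<le> \<bar>s\<bar>} s \<partial>lborel)"
    by (intro nn_integral_mono) (auto simp: indicator_def tail_weight_def)
  also have "\<dots> = emeasure lborel {-1..1::real} +
      (\<integral>\<^sup>+s. ennreal (tail_weight s) * indicator {s. 1 \<le> \<bar>s\<bar>} s \<partial>lborel)"
    by (subst nn_integral_add) auto
  also have "\<dots> \<le> 2 + ennreal (2 / 1)"
    by (intro add_mono nn_integral_tail_weight_tail) simp_all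
  finally show ?thesis by simp
qed

lemma nn_integral_lborel_real_translate:
  fixes f :: "real \<Rightarrow> ennreal"
  assumes [measurable]: "f \<in> borel_measurable borel"
  shows "(\<integral>\<^sup>+s. f (s - c) \<partial>lborel) = (\<integral>\<^sup>+s. f s \<partial>lborel)"
  using nn_integral_real_affine[of f 1 c] nn_integral_real_affine[of "\<lambda>s. f (s - c)" 1 c] by simp

definition tail_weight_factor :: "'a::euclidean_space \<Rightarrow> real \<Rightarrow> 'a \<Rightarrow> 'a \<Rightarrow> real \<Rightarrow> ennreal" where
  "tail_weight_factor y r b0 b s = ennreal (tail_weight (s - y \<bullet> b)) *
    (if b = b0 then indicator {s. r \<le> \<bar>s - y \<bullet> b\<bar>} s else 1)"

lemma tail_weight_outside_box_le_sum:
  fixes x y v :: "'a::euclidean_space"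
  assumes "\<And>b. b \<in> Basis \<Longrightarrow> v \<bullet> b = r"
  shows "ennreal (indicator (- box (y - v) (y + v)) x * (\<Prod>b\<in>Basis. tail_weight ((x - y) \<bullet> b))) \<le>
    (\<Sum>b0\<in>Basis. \<Prod>b\<in>Basis. tail_weight_factor y r b0 b (x \<bullet> b))"
proof (cases "x \<in> box (y - v) (y + v)")
  case False
  then obtain b0 where b0: "b0 \<in> Basis" "\<not> ((y - v) \<bullet> b0 < x \<bullet> b0 \<and> x \<bullet> b0 < (y + v) \<bullet> b0)"
    unfolding mem_box by blast
  then have "r \<le> \<bar>x \<bullet> b0 - y \<bullet> b0\<bar>"
    using assms[OF b0(1)] by (auto simp: inner_diff_left inner_add_left)
  then have "(\<Prod>b\<in>Basis. tail_weight_factor y r b0 b (x \<bullet> b)) = (\<Prod>b\<in>Basis. ennreal (tail_weight ((x - y) \<bullet> b)))"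
    by (intro prod.cong refl) (auto simp: tail_weight_factor_def inner_diff_left)
  also have "\<dots> = ennreal (\<Prod>b\<in>Basis. tail_weight ((x - y) \<bullet> b))"
    by (rule prod_ennreal) (simp add: tail_weight_pos less_imp_le)
  finally show ?thesis
    using False member_le_sum[of b0 Basis "\<lambda>b0. \<Prod>b\<in>Basis. tail_weight_factor y r b0 b (x \<bullet> b)"] b0(1)
    by simp
qed simp

lemma nn_integral_tail_weight_factor_le:
  assumes "r \<ge> 1"
  shows "(\<integral>\<^sup>+s. tail_weight_factor y r b0 b s \<partial>lborel) \<le> (if b = b0 then ennreal (2 / r) else 4)"
proof (cases "b = b0")
  case True
  have "(\<integral>\<^sup>+s. tail_weight_factor y r b0 b s \<partial>lborel) =
      (\<integral>\<^sup>+s. (\<lambda>s. ennreal (tail_weight s) * indicator {s. r \<le> \<bar>s\<bar>} s) (s - y \<bullet> b) \<partial>lborel)"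
    by (intro nn_integral_cong) (simp add: tail_weight_factor_def True indicator_def)
  also have "\<dots> \<le> ennreal (2 / r)"
    by (subst nn_integral_lborel_real_translate) (simp_all add: nn_integral_tail_weight_tail assms)
  finally show ?thesis using True by simp
next
  case False
  have "(\<integral>\<^sup>+s. tail_weight_factor y r b0 b s \<partial>lborel) = (\<integral>\<^sup>+s. ennreal (tail_weight (s - y \<bullet> b)) \<partial>lborel)"
    by (simp add: tail_weight_factor_def False)
  also have "\<dots> \<le> 4"
    by (subst nn_integral_lborel_real_translate[where f = "\<lambda>s. ennreal (tail_weight s)"])
       (simp_all add: nn_integral_tail_weight_le)
  finally show ?thesis using False by simp
qed

lemma nn_integral_tail_weight_outside_box:
  fixes y v :: "'a::euclidean_space"
  assumes "\<And>b. b \<in> Basis \<Longrightarrow> v \<bullet> b = r" and "r \<ge> 1"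
  shows "(\<integral>\<^sup>+x. ennreal (indicator (- box (y - v) (y + v)) x * (\<Prod>b\<in>Basis. tail_weight ((x - y) \<bullet> b))) \<partial>lborel)
     \<le> ennreal (real DIM('a) * (2 / r) * 4 ^ (DIM('a) - 1))"
proof -
  have [measurable]: "tail_weight_factor y r b0 b \<in> borel_measurable borel" for b0 b
    unfolding tail_weight_factor_def by measurable
  have "(\<integral>\<^sup>+x. ennreal (indicator (- box (y - v) (y + v)) x * (\<Prod>b\<in>Basis. tail_weight ((x - y) \<bullet> b))) \<partial>lborel)
      \<le> (\<integral>\<^sup>+x. (\<Sum>b0\<in>Basis. \<Prod>b\<in>Basis. tail_weight_factor y r b0 b (x \<bullet> b)) \<partial>lborel)"
    by (intro nn_integral_mono tail_weight_outside_box_le_sum assms)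
  also have "\<dots> = (\<Sum>b0\<in>Basis. \<Prod>b\<in>Basis. \<integral>\<^sup>+s. tail_weight_factor y r b0 b s \<partial>lborel)"
    by (subst nn_integral_sum) (auto intro!: sum.cong nn_integral_lborel_prod)
  also have "\<dots> \<le> (\<Sum>b0\<in>(Basis::'a set). \<Prod>b\<in>Basis. (if b = b0 then ennreal (2 / r) else 4))"
    by (intro sum_mono prod_mono_ennreal nn_integral_tail_weight_factor_le assms(2))
  also have "\<dots> = (\<Sum>b0\<in>(Basis::'a set). ennreal (2 / r) * 4 ^ (DIM('a) - 1))"
  proof (intro sum.cong refl)
    fix b0 :: 'a assume "b0 \<in> Basis"
    then have "(\<Prod>b\<in>Basis. (if b = b0 then ennreal (2 / r) else 4)) =
        ennreal (2 / r) * (\<Prod>b\<in>Basis - {b0}. (if b = b0 then ennreal (2 / r) else 4))"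
      by (subst prod.remove) auto
    also have "(\<Prod>b\<in>Basis - {b0}. (if b = b0 then ennreal (2 / r) else 4)) = (\<Prod>b\<in>Basis - {b0}. 4)"
      by (intro prod.cong) auto
    also have "\<dots> = 4 ^ (DIM('a) - 1)"
      using \<open>b0 \<in> Basis\<close> by (simp add: prod_constant card_Diff_singleton)
    finally show "(\<Prod>b\<in>Basis. (if b = b0 then ennreal (2 / r) else 4)) = ennreal (2 / r) * 4 ^ (DIM('a) - 1)" .
  qed
  also have "\<dots> = of_nat DIM('a) * (ennreal (2 / r) * 4 ^ (DIM('a) - 1))"
    by (simp only: sum_constant)
  also have "\<dots> = ennreal (real DIM('a) * (2 / r) * 4 ^ (DIM('a) - 1))"
  proof -
    have "ennreal (real DIM('a) * (2 / r) * 4 ^ (DIM('a) - 1)) =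
        ennreal (real DIM('a)) * ennreal (2 / r) * ennreal (4 ^ (DIM('a) - 1))"
      using assms(2) by (metis ennreal_mult mult_nonneg_nonneg of_nat_0_le_iff zero_le_divide_iff
          zero_le_numeral zero_le_power order_trans[OF zero_le_one])
    moreover have "ennreal (4 ^ (DIM('a) - 1)) = 4 ^ (DIM('a) - 1)"
      using ennreal_power[of 4 "DIM('a) - 1"] by simp
    ultimately show ?thesis by (simp add: ennreal_of_nat_eq_real_of_nat mult.assoc)
  qed
  finally show ?thesis .
qed

section \<open>Small norms on sets that are not thick\<close>

lemma powr_le_box_plus_tail:
  fixes f :: "'a::euclidean_space \<Rightarrow> complex"
  assumes "p \<ge> 1" "C1 \<ge> 0" "cmod (f x) \<le> C1" "C2 \<ge> 0"
    "cmod (f x) \<le> C2 * (\<Prod>b\<in>Basis. tail_weight ((x - y) \<bullet> b))"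
  shows "ennreal (indicator E x * cmod (f x) powr p) \<le> ennreal (C1 powr p) * indicator (E \<inter> B) x +
    ennreal (C2 powr p) * ennreal (indicator (- B) x * (\<Prod>b\<in>Basis. tail_weight ((x - y) \<bullet> b)))"
proof -
  let ?w = "\<Prod>b\<in>Basis. tail_weight ((x - y) \<bullet> b)"
  have w: "0 < ?w" "?w \<le> 1"
    by (auto intro!: prod_pos prod_le_1 simp: tail_weight_pos less_imp_le tail_weight_le_one)
  have c1: "cmod (f x) powr p \<le> C1 powr p" using assms by (intro powr_mono2) auto
  have c2: "cmod (f x) powr p \<le> C2 powr p * ?w"
  proof -
    have "cmod (f x) powr p \<le> C2 powr p * ?w powr p"
      using assms w by (simp add: powr_mono2 flip: powr_mult)
    also have "?w powr p \<le> ?w"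
      using w assms(1) by (rule powr_le_one_le)
    finally show ?thesis by (simp add: mult_left_mono)
  qed
  show ?thesis
  proof (cases "x \<in> B")
    case True
    then have "ennreal (indicator E x * cmod (f x) powr p) \<le> ennreal (C1 powr p) * indicator (E \<inter> B) x"
      using c1 by (cases "x \<in> E") (simp_all add: ennreal_leI)
    then show ?thesis by (rule add_increasing2[OF zero_le])
  next
    case False
    then have "ennreal (indicator E x * cmod (f x) powr p) \<le>
        ennreal (C2 powr p) * ennreal (indicator (- B) x * ?w)"
      using c2 by (cases "x \<in> E") (simp_all add: ennreal_mult'[symmetric] ennreal_leI)
    then show ?thesis by (rule add_increasing[OF zero_le])
  qed
qed

lemma set_integral_powr_le_box_plus_tail:
  fixes f :: "'a::euclidean_space \<Rightarrow> complex" and y v :: 'a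
  assumes E: "E \<in> sets lebesgue" and "p \<ge> 1"
    and v: "\<And>b. b \<in> Basis \<Longrightarrow> v \<bullet> b = r" and r: "r \<ge> 1"
    and "C1 \<ge> 0" "\<And>x. cmod (f x) \<le> C1"
    and "C2 \<ge> 0" "\<And>x. cmod (f x) \<le> C2 * (\<Prod>b\<in>Basis. tail_weight ((x - y) \<bullet> b))"
  shows "(\<integral>x\<in>E. cmod (f x) powr p \<partial>lebesgue) \<le>
     C1 powr p * measure lebesgue (E \<inter> box (y - v) (y + v)) +
     C2 powr p * (real DIM('a) * (2 / r) * 4 ^ (DIM('a) - 1))"
proof -
  let ?B = "box (y - v) (y + v)"
  let ?W = "\<lambda>x. indicator (- ?B) x * (\<Prod>b\<in>Basis. tail_weight ((x - y) \<bullet> b))"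
  have EB: "E \<inter> ?B \<in> sets lebesgue" by (intro sets.Int E fmeasurableD lmeasurable_box)
  have "emeasure lebesgue (E \<inter> ?B) = ennreal (measure lebesgue (E \<inter> ?B))"
    by (intro emeasure_eq_measure2 bounded_set_imp_lmeasurable EB bounded_subset[OF bounded_box]) auto
  have W[measurable]: "?W \<in> borel_measurable borel" by measurable
  have pointwise: "ennreal (indicator E x * cmod (f x) powr p) \<le>
      ennreal (C1 powr p) * indicator (E \<inter> ?B) x + ennreal (C2 powr p) * ennreal (?W x)" for x
    by (rule powr_le_box_plus_tail) (use assms in auto)
  have "(\<integral>\<^sup>+x. ennreal (indicator E x * cmod (f x) powr p) \<partial>lebesgue) \<le>
      (\<integral>\<^sup>+x. ennreal (C1 powr p) * indicator (E \<inter> ?B) x + ennreal (C2 powr p) * ennreal (?W x) \<partial>lebesgue)"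
    by (intro nn_integral_mono pointwise)
  also have "\<dots> = (\<integral>\<^sup>+x. ennreal (C1 powr p) * indicator (E \<inter> ?B) x \<partial>lebesgue) +
      (\<integral>\<^sup>+x. ennreal (C2 powr p) * ennreal (?W x) \<partial>lebesgue)"
  proof (rule nn_integral_add)
    show "(\<lambda>x. ennreal (C1 powr p) * indicator (E \<inter> ?B) x) \<in> borel_measurable lebesgue"
      using EB by measurable
    show "(\<lambda>x. ennreal (C2 powr p) * ennreal (?W x)) \<in> borel_measurable lebesgue"
      by (intro borel_measurable_times_ennreal measurable_completion) (use W in auto)
  qed
  also have "(\<integral>\<^sup>+x. ennreal (C1 powr p) * indicator (E \<inter> ?B) x \<partial>lebesgue) =
      ennreal (C1 powr p) * ennreal (measure lebesgue (E \<inter> ?B))"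
    using EB \<open>emeasure lebesgue (E \<inter> ?B) = _\<close> by (simp add: nn_integral_cmult_indicator)
  also have "(\<integral>\<^sup>+x. ennreal (C2 powr p) * ennreal (?W x) \<partial>lebesgue) =
      ennreal (C2 powr p) * (\<integral>\<^sup>+x. ennreal (?W x) \<partial>lborel)"
    by (subst nn_integral_cmult) (auto intro: measurable_completion simp: nn_integral_completion)
  also have "\<dots> \<le> ennreal (C2 powr p) * ennreal (real DIM('a) * (2 / r) * 4 ^ (DIM('a) - 1))"
    by (intro mult_left_mono nn_integral_tail_weight_outside_box v r) auto
  finally have "(\<integral>\<^sup>+x. ennreal (indicator E x * cmod (f x) powr p) \<partial>lebesgue) \<le>
      ennreal (C1 powr p * measure lebesgue (E \<inter> ?B) + C2 powr p * (real DIM('a) * (2 / r) * 4 ^ (DIM('a) - 1)))"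
    using r by (simp add: ennreal_mult'[symmetric] ennreal_plus[symmetric] del: ennreal_plus)
  then show ?thesis
    unfolding set_lebesgue_integral_def using r by (intro integral_real_bounded) auto
qed

lemma Lp_norm_ge_ball:
  fixes f :: "real^'n \<Rightarrow> complex"
  assumes "integrable lebesgue (\<lambda>x. cmod (f x) powr p)" "p > 0" "\<delta> > 0" "c \<ge> 0"
    and "\<And>x. x \<in> ball y \<delta> \<Longrightarrow> c \<le> cmod (f x)"
  shows "(c powr p * (unit_ball_vol (real CARD('n)) * \<delta> ^ CARD('n))) powr (1 / p) \<le> Lp_norm p f"
proof -
  have "measure lebesgue (ball y \<delta>) = unit_ball_vol (real CARD('n)) * \<delta> ^ CARD('n)"
    using emeasure_ball[of \<delta> y] assms(3) by (simp add: measure_def)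
  moreover have "c powr p * measure lebesgue (ball y \<delta>) \<le> (\<integral>x. cmod (f x) powr p \<partial>lebesgue)"
  proof -
    have "c powr p * measure lebesgue (ball y \<delta>) = (\<integral>x. indicator (ball y \<delta>) x * c powr p \<partial>lebesgue)"
      by simp
    also have "\<dots> \<le> (\<integral>x. cmod (f x) powr p \<partial>lebesgue)"
    proof (rule integral_mono[OF _ assms(1)])
      show "integrable lebesgue (\<lambda>x. indicator (ball y \<delta>) x * c powr p :: real)"
        using lmeasurable_ball
        by (intro integrable_mult_left integrable_real_indicator) (auto simp: fmeasurable_def)
      show "indicator (ball y \<delta>) x * c powr p \<le> cmod (f x) powr p" for x
        using assms(2,4) assms(5)[of x] by (cases "x \<in> ball y \<delta>") (auto intro: powr_mono2)
    qed
    finally show ?thesis .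
  qed
  ultimately show ?thesis
    unfolding Lp_norm_def using assms(2-4) by (intro powr_mono2) auto
qed

lemma esssup_le_real:
  assumes "0 \<le> G" "\<And>x. x \<in> space M \<Longrightarrow> g x \<le> G"
  shows "real_of_ereal (esssup M (\<lambda>x. ereal (g x))) \<le> G"
proof (cases "(\<lambda>x. ereal (g x)) \<in> borel_measurable M")
  case True
  have "esssup M (\<lambda>x. ereal (g x)) \<le> ereal G"
    by (rule esssup_I[OF True]) (auto intro!: AE_I2 assms(2))
  then show ?thesis using assms(1) by (cases "esssup M (\<lambda>x. ereal (g x))") auto
next
  case False
  then show ?thesis using assms(1) by (simp add: esssup_non_measurable top_ereal_def)
qed

lemma set_integral_powr_le_interval:
  fixes g :: "real \<Rightarrow> real"
  assumes "0 < T" "0 \<le> G" "q > 0" "\<And>t. t \<in> {0<..<T} \<Longrightarrow> 0 \<le> g t \<and> g t \<le> G"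
  shows "(\<integral>t\<in>{0<..<T}. g t powr q \<partial>lborel) \<le> G powr q * T"
proof -
  have "(\<integral>\<^sup>+t. ennreal (indicator {0<..<T} t *\<^sub>R g t powr q) \<partial>lborel) \<le>
      (\<integral>\<^sup>+t. ennreal (G powr q) * indicator {0<..<T} t \<partial>lborel)"
  proof (intro nn_integral_mono)
    fix t :: real
    show "ennreal (indicator {0<..<T} t *\<^sub>R g t powr q) \<le> ennreal (G powr q) * indicator {0<..<T} t"
    proof (cases "t \<in> {0<..<T}")
      case True
      then have "g t powr q \<le> G powr q" using assms(3,4) by (intro powr_mono2) auto
      then show ?thesis using True by (simp add: ennreal_leI)
    qed simp
  qed
  also have "\<dots> = ennreal (G powr q * T)"
    using assms(1) by (simp add: nn_integral_cmult_indicator ennreal_mult)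
  finally show ?thesis
    unfolding set_lebesgue_integral_def using assms(1) by (intro integral_real_bounded) simp_all
qed

lemma Lr_time_norm_le:
  assumes "1 \<le> r" "0 < T" "0 \<le> G" "\<And>t. t \<in> {0<..<T} \<Longrightarrow> 0 \<le> g t \<and> g t \<le> G"
  shows "Lr_time_norm r T g \<le> max 1 T * G"
proof (cases "r = \<infinity>")
  case True
  then have "Lr_time_norm r T g = real_of_ereal (esssup (restrict_space lborel {0<..<T}) (\<lambda>t. ereal (g t)))"
    by (simp add: Lr_time_norm_def)
  also have "\<dots> \<le> G"
    by (rule esssup_le_real[OF assms(3)]) (use assms(4) in \<open>auto simp: space_restrict_space\<close>)
  finally have "Lr_time_norm r T g \<le> G" .
  moreover have "G \<le> max 1 T * G" using assms(3) by (simp add: mult_le_cancel_right1)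
  ultimately show ?thesis by linarith
next
  case False
  then obtain q where q: "r = ereal q" "q \<ge> 1" using assms(1) by (cases r) auto
  have "0 \<le> (\<integral>t\<in>{0<..<T}. g t powr q \<partial>lborel)"
    unfolding set_lebesgue_integral_def by (intro integral_nonneg_AE AE_I2) (auto simp: indicator_def)
  then have "(\<integral>t\<in>{0<..<T}. g t powr q \<partial>lborel) powr (1 / q) \<le> (G powr q * T) powr (1 / q)"
    using q assms by (intro powr_mono2 set_integral_powr_le_interval) auto
  also have "\<dots> = G * T powr (1 / q)"
    using assms(2,3) q by (simp add: powr_mult powr_powr)
  also have "\<dots> \<le> G * max 1 T"
  proof (intro mult_left_mono assms(3))
    show "T powr (1 / q) \<le> max 1 T"
    proof (cases "T \<le> 1")
      case True
      then have "T powr (1 / q) \<le> 1" using powr_mono2[of "1/q" T 1] assms(2) q by simp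
      then show ?thesis by simp
    next
      case False
      then have "T powr (1 / q) \<le> T powr 1" using q by (intro powr_mono) auto
      then show ?thesis using assms(2) by simp
    qed
  qed
  finally show ?thesis using q by (simp add: Lr_time_norm_def mult.commute)
qed

lemma not_thick_sparse_cube:
  fixes E :: "(real^'n) set"
  assumes "E \<in> sets lebesgue" "\<not> thick E" "0 < \<rho>" "\<rho> < 1" "0 < L"
  obtains x0 where "measure lebesgue (E \<inter> box x0 (x0 + (\<chi> i. L))) < \<rho> * L ^ CARD('n)"
proof -
  have "\<not> (\<forall>x::real^'n. \<rho> * (\<Prod>i\<in>UNIV. ((\<chi> i. L) :: real^'n) $ i) \<le> measure lebesgue (E \<inter> box x (x + (\<chi> i. L))))"
  proof
    assume "\<forall>x::real^'n. \<rho> * (\<Prod>i\<in>UNIV. ((\<chi> i. L) :: real^'n) $ i) \<le> measure lebesgue (E \<inter> box x (x + (\<chi> i. L)))"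
    then have "thick E"
      unfolding thick_def using assms(1,3-5) by (intro conjI exI[of _ \<rho>] exI[of _ "\<chi> i. L"]) auto
    then show False using assms(2) by contradiction
  qed
  then show ?thesis using that by (auto simp: not_le)
qed

lemma Lp_norm_on_le:
  assumes "(\<integral>x\<in>E. cmod (f x) powr p \<partial>lebesgue) \<le> \<epsilon> powr p" "p > 0" "\<epsilon> \<ge> 0"
  shows "Lp_norm_on p E f \<le> \<epsilon>"
proof -
  have "0 \<le> (\<integral>x\<in>E. cmod (f x) powr p \<partial>lebesgue)"
    unfolding set_lebesgue_integral_def by (intro integral_nonneg_AE AE_I2) (auto simp: indicator_def)
  then have "Lp_norm_on p E f \<le> (\<epsilon> powr p) powr (1 / p)"
    unfolding Lp_norm_on_def using assms by (intro powr_mono2) auto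
  then show ?thesis using assms(2,3) by (simp add: powr_powr)
qed

lemma set_integral_powr_le_cube_plus_tail:
  fixes E :: "(real^'n) set" and f :: "real^'n \<Rightarrow> complex"
  assumes "E \<in> sets lebesgue" "p \<ge> 1" "R \<ge> 1" "C1 \<ge> 0" "C2 \<ge> 0"
    and "\<And>x. cmod (f x) \<le> C1"
    and "\<And>x. cmod (f x) \<le> C2 * (\<Prod>b\<in>Basis. tail_weight ((x - (x0 + (\<chi> i. R))) \<bullet> b))"
  shows "(\<integral>x\<in>E. cmod (f x) powr p \<partial>lebesgue) \<le>
    C1 powr p * measure lebesgue (E \<inter> box x0 (x0 + (\<chi> i. 2 * R))) +
    C2 powr p * (real CARD('n) * (2 / R) * 4 ^ (CARD('n) - 1))"
proof -
  have v: "(\<chi> i. R) \<bullet> b = R" if "b \<in> Basis" for b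
    using that by (auto simp: Basis_vec_def inner_axis)
  have "x0 + (\<chi> i. R) - (\<chi> i. R) = x0" "x0 + (\<chi> i. R) + (\<chi> i. R) = x0 + (\<chi> i. 2 * R)"
    by (simp_all add: vec_eq_iff)
  moreover have "(\<integral>x\<in>E. cmod (f x) powr p \<partial>lebesgue) \<le>
      C1 powr p * measure lebesgue (E \<inter> box (x0 + (\<chi> i. R) - (\<chi> i. R)) (x0 + (\<chi> i. R) + (\<chi> i. R))) +
      C2 powr p * (real DIM(real^'n) * (2 / R) * 4 ^ (DIM(real^'n) - 1))"
    by (rule set_integral_powr_le_box_plus_tail[OF assms(1,2) v assms(3,4,6,5,7)])
  ultimately show ?thesis by (simp add: add.commute)
qed

lemma Lp_norm_on_small_on_sparse_set:
  fixes E :: "(real^'n) set"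
  assumes E: "E \<in> sets lebesgue" "\<not> thick E" and p: "p \<ge> 1" and C: "C1 \<ge> 0" "C2 \<ge> 0" and "\<epsilon> > 0"
  obtains y where "\<And>f. (\<And>x. cmod (f x) \<le> C1) \<Longrightarrow>
    (\<And>x. cmod (f x) \<le> C2 * (\<Prod>b\<in>Basis. tail_weight ((x - y) \<bullet> b))) \<Longrightarrow> Lp_norm_on p E f \<le> \<epsilon>"
proof -
  define \<gamma> where "\<gamma> = \<epsilon> powr p"
  have "\<gamma> > 0" using \<open>\<epsilon> > 0\<close> by (simp add: \<gamma>_def)
  define Q where "Q = C2 powr p * (real CARD('n) * 2 * 4 ^ (CARD('n) - 1))"
  define R where "R = max 1 (2 * Q / \<gamma>)"
  define A where "A = C1 powr p * (2 * R) ^ CARD('n)"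
  define \<rho> where "\<rho> = min (1/2) (\<gamma> / (2 * (A + 1)))"
  have "R \<ge> 1" "A \<ge> 0" by (auto simp: R_def A_def)
  have "0 < \<rho>" "\<rho> < 1" using \<open>\<gamma> > 0\<close> \<open>A \<ge> 0\<close> by (auto simp: \<rho>_def)
  then obtain x0 where x0: "measure lebesgue (E \<inter> box x0 (x0 + (\<chi> i. 2 * R))) < \<rho> * (2 * R) ^ CARD('n)"
    using not_thick_sparse_cube[OF E, of \<rho> "2 * R"] \<open>R \<ge> 1\<close> by auto
  have "C1 powr p * measure lebesgue (E \<inter> box x0 (x0 + (\<chi> i. 2 * R))) \<le> C1 powr p * (\<rho> * (2 * R) ^ CARD('n))"
    using x0 by (intro mult_left_mono) auto
  also have "\<dots> = A * \<rho>" by (simp add: A_def)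
  also have "\<dots> \<le> A * (\<gamma> / (2 * (A + 1)))"
    using \<open>A \<ge> 0\<close> by (intro mult_left_mono) (auto simp: \<rho>_def)
  also have "\<dots> = (\<gamma> / 2) * (A / (A + 1))"
    using \<open>A \<ge> 0\<close> by (simp add: field_simps add_nonneg_pos)
  also have "\<dots> \<le> \<gamma> / 2"
    using \<open>\<gamma> > 0\<close> \<open>A \<ge> 0\<close> by (simp add: mult_left_le divide_le_eq)
  finally have cube: "C1 powr p * measure lebesgue (E \<inter> box x0 (x0 + (\<chi> i. 2 * R))) \<le> \<gamma> / 2" .
  have "2 * Q / \<gamma> \<le> R" by (simp add: R_def)
  then have tail: "C2 powr p * (real CARD('n) * (2 / R) * 4 ^ (CARD('n) - 1)) \<le> \<gamma> / 2"
    using \<open>\<gamma> > 0\<close> \<open>R \<ge> 1\<close> by (simp add: Q_def field_simps)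
  show ?thesis
  proof (rule that[of "x0 + (\<chi> i. R)"])
    fix f :: "real^'n \<Rightarrow> complex"
    assume "\<And>x. cmod (f x) \<le> C1"
      "\<And>x. cmod (f x) \<le> C2 * (\<Prod>b\<in>Basis. tail_weight ((x - (x0 + (\<chi> i. R))) \<bullet> b))"
    then have "(\<integral>x\<in>E. cmod (f x) powr p \<partial>lebesgue) \<le>
        C1 powr p * measure lebesgue (E \<inter> box x0 (x0 + (\<chi> i. 2 * R))) +
        C2 powr p * (real CARD('n) * (2 / R) * 4 ^ (CARD('n) - 1))"
      by (rule set_integral_powr_le_cube_plus_tail[OF E(1) p \<open>R \<ge> 1\<close> C])
    also have "\<dots> \<le> \<gamma> / 2 + \<gamma> / 2" using cube tail by (rule add_mono)
    finally have "(\<integral>x\<in>E. cmod (f x) powr p \<partial>lebesgue) \<le> \<epsilon> powr p" by (simp add: \<gamma>_def)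
    then show "Lp_norm_on p E f \<le> \<epsilon>" using p \<open>\<epsilon> > 0\<close> by (intro Lp_norm_on_le) auto
  qed
qed

lemma norm_ge_half_near_zero:
  fixes f :: "'a::real_normed_vector \<Rightarrow> 'b::real_normed_vector"
  assumes "\<Lambda> \<ge> 0" "\<And>w. norm (f w - f 0) \<le> \<Lambda> * norm w" "f 0 \<noteq> 0"
  obtains \<delta> where "\<delta> > 0" "\<And>w. norm w < \<delta> \<Longrightarrow> norm (f 0) / 2 \<le> norm (f w)"
proof
  define \<delta> where "\<delta> = norm (f 0) / (2 * (\<Lambda> + 1))"
  show "\<delta> > 0" using assms by (simp add: \<delta>_def)
  fix w :: 'a
  assume "norm w < \<delta>"
  then have "\<Lambda> * norm w \<le> \<Lambda> * \<delta>" using assms(1) by (simp add: mult_left_mono)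
  also have "\<Lambda> * \<delta> = norm (f 0) / 2 * (\<Lambda> / (\<Lambda> + 1))" using assms(1) by (simp add: \<delta>_def field_simps)
  also have "\<dots> \<le> norm (f 0) / 2 * 1" using assms(1) by (intro mult_left_mono) (auto simp: divide_le_eq)
  finally show "norm (f 0) / 2 \<le> norm (f w)"
    using assms(2)[of w] norm_triangle_sub[of "f 0" "f w"] by (simp add: norm_minus_commute)
qed

lemma semigroup_gaussian_Lp_lower_bound:
  fixes S :: "real \<Rightarrow> (real^'n \<Rightarrow> complex) \<Rightarrow> real^'n \<Rightarrow> complex"
  assumes S: "is_elliptic_semigroup p a S" and p: "p > 0" and "T \<ge> 0" "l > 0"
    and a: "complex_polynomial_function a" "\<And>\<xi>. Re (a \<xi>) \<ge> 0" and "damped_kernel a l T 0 \<noteq> 0"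
  obtains \<mu> where "\<mu> > 0" "\<And>y. \<mu> \<le> Lp_norm p (S T (gaussian l y))"
proof -
  define \<kappa> where "\<kappa> = (2 * pi) powr (- real CARD('n) / 2) * l ^ CARD('n)"
  have "\<kappa> > 0" using \<open>l > 0\<close> by (simp add: \<kappa>_def)
  define c where "c = \<kappa> * cmod (damped_kernel a l T 0) / 2"
  have "c > 0" using \<open>\<kappa> > 0\<close> assms(7) by (simp add: c_def)
  obtain \<Lambda> where "\<Lambda> \<ge> 0" "\<And>w. cmod (damped_kernel a l T w - damped_kernel a l T 0) \<le> \<Lambda> * norm w"
    using damped_kernel_lipschitz[OF a \<open>l > 0\<close> \<open>T \<ge> 0\<close>] by blast
  then obtain \<delta> where "\<delta> > 0"
    and half: "\<And>w. norm w < \<delta> \<Longrightarrow> cmod (damped_kernel a l T 0) / 2 \<le> cmod (damped_kernel a l T w)"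
    using norm_ge_half_near_zero[of \<Lambda> "damped_kernel a l T"] assms(7) by blast
  have near: "c \<le> \<kappa> * cmod (damped_kernel a l T w)" if "norm w < \<delta>" for w
    using mult_left_mono[OF half[OF that], of \<kappa>] \<open>\<kappa> > 0\<close> by (simp add: c_def)
  show ?thesis
  proof (rule that)
    show "0 < (c powr p * (unit_ball_vol (real CARD('n)) * \<delta> ^ CARD('n))) powr (1 / p)"
      using \<open>c > 0\<close> \<open>\<delta> > 0\<close> unit_ball_vol_pos[of "real CARD('n)"] by (simp add: less_imp_neq[symmetric])
    fix y :: "real^'n"
    have "in_Lp p (S T (gaussian l y))"
      using S \<open>T \<ge> 0\<close> in_Lp_gaussian[OF \<open>l > 0\<close> p] unfolding is_elliptic_semigroup_def by blast
    then have "integrable lebesgue (\<lambda>x. cmod (S T (gaussian l y) x) powr p)"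
      unfolding in_Lp_def by blast
    then show "(c powr p * (unit_ball_vol (real CARD('n)) * \<delta> ^ CARD('n))) powr (1 / p) \<le> Lp_norm p (S T (gaussian l y))"
    proof (rule Lp_norm_ge_ball[OF _ p \<open>\<delta> > 0\<close>])
      show "c \<le> cmod (S T (gaussian l y) x)" if "x \<in> ball y \<delta>" for x
        using near[of "x - y"] that \<open>l > 0\<close>
        by (simp add: semigroup_gaussian[OF S \<open>T \<ge> 0\<close> \<open>l > 0\<close>] \<kappa>_def dist_norm norm_mult norm_power
            norm_minus_commute)
    qed (use \<open>c > 0\<close> in auto)
  qed
qed

lemma semigroup_gaussian_bounds:
  fixes S :: "real \<Rightarrow> (real^'n \<Rightarrow> complex) \<Rightarrow> real^'n \<Rightarrow> complex"
  assumes S: "is_elliptic_semigroup p a S" and "l > 0"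
    and a: "complex_polynomial_function a" "\<And>\<xi>. Re (a \<xi>) \<ge> 0"
  obtains C1 C2 where "C1 \<ge> 0" "C2 \<ge> 0" "\<And>t y x. 0 \<le> t \<Longrightarrow> t \<le> T \<Longrightarrow> cmod (S t (gaussian l y) x) \<le> C1"
    "\<And>t y x. 0 \<le> t \<Longrightarrow> t \<le> T \<Longrightarrow>
      cmod (S t (gaussian l y) x) \<le> C2 * (\<Prod>b\<in>Basis. tail_weight ((x - y) \<bullet> b))"
proof -
  define \<kappa> where "\<kappa> = (2 * pi) powr (- real CARD('n) / 2) * l ^ CARD('n)"
  have "\<kappa> > 0" using \<open>l > 0\<close> by (simp add: \<kappa>_def)
  have S_eq: "cmod (S t (gaussian l y) x) = \<kappa> * cmod (damped_kernel a l t (x - y))" if "t \<ge> 0" for t y x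
    using \<open>l > 0\<close> by (simp add: semigroup_gaussian[OF S that \<open>l > 0\<close>] \<kappa>_def norm_mult norm_power)
  obtain K where "K \<ge> 0" and K:
    "\<And>t w. 0 \<le> t \<Longrightarrow> t \<le> T \<Longrightarrow> cmod (damped_kernel a l t w) \<le> K * (\<Prod>b\<in>Basis. tail_weight (w \<bullet> b))"
    using damped_kernel_tail_weight_bound[OF a \<open>l > 0\<close>] by blast
  show ?thesis
  proof (rule that[of "\<kappa> * (\<integral>\<xi>. cmod (gaussian (1 / l) (0::real^'n) \<xi>) \<partial>lborel)" "\<kappa> * K"])
    show "0 \<le> \<kappa> * (\<integral>\<xi>. cmod (gaussian (1 / l) (0::real^'n) \<xi>) \<partial>lborel)" "0 \<le> \<kappa> * K"
      using \<open>\<kappa> > 0\<close> \<open>K \<ge> 0\<close> by simp_all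
    fix t y and x :: "real^'n"
    assume "0 \<le> t" "t \<le> T"
    then show "cmod (S t (gaussian l y) x) \<le> \<kappa> * (\<integral>\<xi>. cmod (gaussian (1 / l) (0::real^'n) \<xi>) \<partial>lborel)"
      "cmod (S t (gaussian l y) x) \<le> \<kappa> * K * (\<Prod>b\<in>Basis. tail_weight ((x - y) \<bullet> b))"
      using norm_damped_kernel_le[OF a \<open>0 \<le> t\<close> \<open>l > 0\<close>, of "x - y"] \<open>\<kappa> > 0\<close>
        K[of t "x - y"]
      by (simp_all add: S_eq mult.assoc)
  qed
qed

lemma semigroup_gaussian_small_on_sparse_set:
  fixes S :: "real \<Rightarrow> (real^'n \<Rightarrow> complex) \<Rightarrow> real^'n \<Rightarrow> complex"
  assumes S: "is_elliptic_semigroup p a S" and "l > 0"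
    and a: "complex_polynomial_function a" "\<And>\<xi>. Re (a \<xi>) \<ge> 0"
    and E: "E \<in> sets lebesgue" "\<not> thick E" and "p \<ge> 1" "\<epsilon> > 0"
  obtains y where "\<And>t. 0 \<le> t \<Longrightarrow> t \<le> T \<Longrightarrow> Lp_norm_on p E (S t (gaussian l y)) \<le> \<epsilon>"
proof -
  obtain C1 C2 where "C1 \<ge> 0" "C2 \<ge> 0" and bounds:
    "\<And>t y x. 0 \<le> t \<Longrightarrow> t \<le> T \<Longrightarrow> cmod (S t (gaussian l y) x) \<le> C1"
    "\<And>t y x. 0 \<le> t \<Longrightarrow> t \<le> T \<Longrightarrow> cmod (S t (gaussian l y) x) \<le> C2 * (\<Prod>b\<in>Basis. tail_weight ((x - y) \<bullet> b))"
    using semigroup_gaussian_bounds[OF S \<open>l > 0\<close> a] by blast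
  obtain y where y: "\<And>f. (\<And>x. cmod (f x) \<le> C1) \<Longrightarrow>
      (\<And>x. cmod (f x) \<le> C2 * (\<Prod>b\<in>Basis. tail_weight ((x - y) \<bullet> b))) \<Longrightarrow> Lp_norm_on p E f \<le> \<epsilon>"
    using Lp_norm_on_small_on_sparse_set[OF E \<open>p \<ge> 1\<close> \<open>C1 \<ge> 0\<close> \<open>C2 \<ge> 0\<close> \<open>\<epsilon> > 0\<close>] by blast
  show ?thesis
    by (rule that[of y]) (intro y bounds)
qed

theorem theorem3p4:
  fixes p :: real and r :: ereal and m :: nat
    and c :: "('n::finite \<Rightarrow> nat) \<Rightarrow> complex"
    and S :: "real \<Rightarrow> (real^'n \<Rightarrow> complex) \<Rightarrow> real^'n \<Rightarrow> complex"
    and E :: "(real^'n) set" and T :: real and C_obs :: real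
  assumes "1 < p"
    and "1 \<le> r"
    and "2 \<le> m"
    and "strongly_elliptic m c"
    and "is_elliptic_semigroup p (hom_symbol m c) S"
    and "E \<in> sets lebesgue"
    and "0 < T"
    and "0 < C_obs"
    and "\<forall>x0. in_Lp p x0 \<longrightarrow>
           Lp_norm p (S T x0) \<le> C_obs * Lr_time_norm r T (\<lambda>t. Lp_norm_on p E (S t x0))"
  shows "thick E"
proof (rule ccontr)
  assume "\<not> thick E"
  let ?a = "hom_symbol m c"
  have a: "complex_polynomial_function ?a" "\<And>\<xi>. Re (?a \<xi>) \<ge> 0"
    using complex_polynomial_function_hom_symbol strongly_elliptic_Re_nonneg[OF assms(4)] by auto
  have "m > 0" "1 \<le> p" "0 \<le> T" using assms(1,3,7) by auto
  then obtain l where l: "l > 0" "damped_kernel ?a l T 0 \<noteq> 0"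
    using damped_kernel_zero_nonzero[OF continuous_on_complex_polynomial_function[OF a(1)] hom_symbol_scaleR a(2)]
    by blast
  obtain \<mu> where "\<mu> > 0" and lower: "\<And>y. \<mu> \<le> Lp_norm p (S T (gaussian l y))"
    using semigroup_gaussian_Lp_lower_bound[OF assms(5) _ \<open>0 \<le> T\<close> l(1) a l(2)] assms(1) by auto
  define \<epsilon> where "\<epsilon> = \<mu> / (2 * C_obs * max 1 T)"
  have "\<epsilon> > 0" using \<open>\<mu> > 0\<close> assms(8) by (simp add: \<epsilon>_def)
  then obtain y where "\<And>t. 0 \<le> t \<Longrightarrow> t \<le> T \<Longrightarrow> Lp_norm_on p E (S t (gaussian l y)) \<le> \<epsilon>"
    using semigroup_gaussian_small_on_sparse_set[OF assms(5) l(1) a assms(6) \<open>\<not> thick E\<close> \<open>1 \<le> p\<close>] by blast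
  then have "Lr_time_norm r T (\<lambda>t. Lp_norm_on p E (S t (gaussian l y))) \<le> max 1 T * \<epsilon>"
    using \<open>\<epsilon> > 0\<close> assms(2,7) by (intro Lr_time_norm_le) (auto simp: Lp_norm_on_def)
  then have "C_obs * Lr_time_norm r T (\<lambda>t. Lp_norm_on p E (S t (gaussian l y))) \<le> C_obs * (max 1 T * \<epsilon>)"
    using assms(8) by (intro mult_left_mono) auto
  moreover have "in_Lp p (gaussian l y)" by (rule in_Lp_gaussian[OF l(1)]) (use assms(1) in simp)
  ultimately have "Lp_norm p (S T (gaussian l y)) \<le> C_obs * (max 1 T * \<epsilon>)"
    using assms(9) by force
  also have "\<dots> = \<mu> / 2" using assms(8) by (simp add: \<epsilon>_def field_simps)
  finally show False using lower[of y] \<open>\<mu> > 0\<close> by simp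
qed

end
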